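(* Let $A\in\mathbb{C}^{n\times n}$ with $\mathrm{Ind}(A)=k$ be written in the core-EP decomposition $A=U\begin{bmatrix}T&S\\0&N\end{bmatrix}U^*$ (as in the context), and let $m\in\mathbb{N}=\{1,2,\dots\}$. For $\ell\in\mathbb{N}$ put $\tilde{T}_\ell=\sum_{i=0}^{\ell-1}T^iSN^{\ell-1-i}$. Then: (a) $A^{\#_m}=A^\dagger$ if and only if $S=0$ and $N=0$; (b) $A^{\#_m}=A^d$ if and only if $\tilde{T}_mP_{N^m}=T^{m-k}\tilde{T}_k$; (c) $A^{\#_m}=A^{\mathrm{cEP}}$ if and only if $\tilde{T}_mN^m=0$; (d) $A^{\#_m}=A^{d,\dagger}$ if and only if $\tilde{T}_mP_{N^m}=T^{m-k}\tilde{T}_kP_N$; (e) $A^{\#_m}=A^{\mathrm{WC}}$ if and only if $\tilde{T}_mP_{N^m}=T^{m-1}SP_N$; (f) $A^{\#_m}=A^{\mathrm{WG}_m}$ if and only if $\mathcal{N}((N^m)^* )\subseteq\mathcal{N}(\tilde{T}_m)$.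
   Context: Core-EP decomposition: every $A\in\mathbb{C}^{n\times n}$ of index $k$ can be written as $A=U\begin{bmatrix}T&S\\0&N\end{bmatrix}U^*$ with $U$ unitary, $T\in\mathbb{C}^{t\times t}$ nonsingular, $t=\mathrm{rk}(A^k)$, and $N\in\mathbb{C}^{(n-t)\times(n-t)}$ nilpotent of index $k$ (blocks of size zero allowed). The index $\mathrm{Ind}(A)$ is the smallest nonnegative integer $k$ with $\mathcal{R}(A^k)=\mathcal{R}(A^{k+1})$, $A^0=I$. For a matrix $B$: $B^\dagger$ Moore–Penrose inverse, $P_B=BB^\dagger$, $\mathcal{R}(\cdot)$, $\mathcal{N}(\cdot)$ column space and null space. $A^d$ is the Drazin inverse (unique $X$ with $XAX=X$, $AX=XA$, $XA^{k+1}=A^k$). The DMP inverse is $A^{d,\dagger}:=A^dAA^\dagger$. The core-EP inverse $A^{\mathrm{cEP}}$ is the unique $X$ with $XAX=X$ and $\mathcal{R}(X)=\mathcal{R}(X^* )=\mathcal{R}(A^k)$. The WG inverse is $A^{\mathrm{WG}}:=(A^{\mathrm{cEP}})^2A$ and the WC inverse is $A^{\mathrm{WC}}:=A^{\mathrm{WG}}P_A$. For $m\in\mathbb{N}$, the $m$-weak group inverse is $A^{\mathrm{WG}_m}:=(A^{\mathrm{cEP}})^{m+1}A^m$ and the $m$-weak core inverse is $A^{\#_m}:=A^{\mathrm{WG}_m}P_{A^m}$. *)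

theory Defs
  imports "Jordan_Normal_Form.Schur_Decomposition" "Jordan_Normal_Form.Matrix_Kernel"
          "Jordan_Normal_Form.DL_Rank"
begin

definition mat_range :: "complex mat \<Rightarrow> complex vec set" where
  "mat_range A = {A *\<^sub>v x | x. x \<in> carrier_vec (dim_col A)}"

definition mat_index :: "complex mat \<Rightarrow> nat" where
  "mat_index A = (LEAST k. mat_range (A ^\<^sub>m k) = mat_range (A ^\<^sub>m Suc k))"

definition mp_inverse :: "complex mat \<Rightarrow> complex mat" where
  "mp_inverse A = (THE X. X \<in> carrier_mat (dim_col A) (dim_row A) \<and>
      A * X * A = A \<and> X * A * X = X \<and>
      mat_adjoint (A * X) = A * X \<and> mat_adjoint (X * A) = X * A)"

definition proj :: "complex mat \<Rightarrow> complex mat" where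
  "proj B = B * mp_inverse B"

definition drazin :: "complex mat \<Rightarrow> complex mat" where
  "drazin A = (THE X. X \<in> carrier_mat (dim_row A) (dim_row A) \<and>
      X * A * X = X \<and> A * X = X * A \<and>
      X * A ^\<^sub>m (Suc (mat_index A)) = A ^\<^sub>m (mat_index A))"

definition dmp_inverse :: "complex mat \<Rightarrow> complex mat" where
  "dmp_inverse A = drazin A * A * mp_inverse A"

definition core_ep :: "complex mat \<Rightarrow> complex mat" where
  "core_ep A = (THE X. X \<in> carrier_mat (dim_row A) (dim_row A) \<and>
      X * A * X = X \<and> mat_range X = mat_range (A ^\<^sub>m (mat_index A)) \<and>
      mat_range (mat_adjoint X) = mat_range (A ^\<^sub>m (mat_index A)))"

definition wg_inverse :: "complex mat \<Rightarrow> complex mat" where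
  "wg_inverse A = (core_ep A ^\<^sub>m 2) * A"

definition wc_inverse :: "complex mat \<Rightarrow> complex mat" where
  "wc_inverse A = wg_inverse A * proj A"

definition mwg_inverse :: "nat \<Rightarrow> complex mat \<Rightarrow> complex mat" where
  "mwg_inverse m A = (core_ep A ^\<^sub>m (Suc m)) * (A ^\<^sub>m m)"

definition mwc_inverse :: "nat \<Rightarrow> complex mat \<Rightarrow> complex mat" where
  "mwc_inverse m A = mwg_inverse m A * proj (A ^\<^sub>m m)"

definition mat_inv :: "complex mat \<Rightarrow> complex mat" where
  "mat_inv T = (THE B. B \<in> carrier_mat (dim_row T) (dim_row T) \<and>
      T * B = 1\<^sub>m (dim_row T) \<and> B * T = 1\<^sub>m (dim_row T))"

definition mat_ipow :: "complex mat \<Rightarrow> int \<Rightarrow> complex mat" where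
  "mat_ipow T z = (if 0 \<le> z then T ^\<^sub>m nat z else mat_inv T ^\<^sub>m nat (- z))"

fun msum :: "nat \<Rightarrow> nat \<Rightarrow> (nat \<Rightarrow> complex mat) \<Rightarrow> nat \<Rightarrow> complex mat" where
  "msum r c f 0 = 0\<^sub>m r c"
| "msum r c f (Suc l) = msum r c f l + f l"

definition ttilde :: "complex mat \<Rightarrow> complex mat \<Rightarrow> complex mat \<Rightarrow> nat \<Rightarrow> complex mat" where
  "ttilde T S N l = msum (dim_row S) (dim_col S)
      (\<lambda>i. T ^\<^sub>m i * S * N ^\<^sub>m (l - 1 - i)) l"

end

theory Submission
  imports Defs
begin

text \<open>Conjugating by \<open>U\<close> reduces everything to \<open>B = [T S; 0 N]\<close>, whose powers are
  \<open>B^j = [T^j T~_j; 0 N^j]\<close>; as \<open>N^k = 0\<close>, the ranges of \<open>B^k\<close> and \<open>(B^k)^*\<close> can be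
  compared with those of block matrices \<open>[V W; 0 0]\<close> with \<open>V\<close> invertible. In this way every
  inverse in the statement except the Moore--Penrose inverse takes the form
  \<open>U [T^-1 X; 0 0] U^*\<close>: \<open>X = 0\<close> for the core-EP inverse, \<open>X = T^-(k+1) T~_k\<close> for the
  Drazin inverse, \<open>X = T^-(m+1) T~_m\<close> for the \<open>m\<close>-weak group inverse and \<open>X = T^-2 S\<close> for
  the WG inverse; right multiplication by the orthogonal projector onto the range of
  \<open>[T R; 0 L]\<close> just multiplies \<open>X\<close> by \<open>P_L\<close>, which gives the DMP, WC and \<open>m\<close>-weak core
  inverses. Two matrices of this form coincide iff their \<open>X\<close> do, and multiplying by
  \<open>T^(m+1)\<close> turns these equalities into (b)--(f). For (a), the Penrose equations for \<open>B\<close>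
  and a matrix of this form force \<open>N = 0\<close> and then \<open>S = 0\<close>.\<close>

lemma mat_mult_assoc_dims:
  assumes "dim_col A = dim_row B" "dim_col B = dim_row C"
  shows "A * B * C = A * (B * C)"
proof -
  have "B \<in> carrier_mat (dim_col A) (dim_col B)" "C \<in> carrier_mat (dim_col B) (dim_col C)"
    using assms unfolding carrier_mat_def by simp_all
  then show ?thesis by (rule assoc_mult_mat[OF carrier_mat_triv])
qed

lemma mult_carrier_mat_square:
  "A \<in> carrier_mat n n \<Longrightarrow> B \<in> carrier_mat n n \<Longrightarrow> A * B \<in> carrier_mat n n"
  by (rule mult_carrier_mat)

lemma smult_mat_mult_mat_vec_assoc:
  "M \<in> carrier_mat n m \<Longrightarrow> x \<in> carrier_vec m \<Longrightarrow> (c \<cdot>\<^sub>m M) *\<^sub>v x = c \<cdot>\<^sub>v (M *\<^sub>v x)"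
  by (rule eq_vecI) (auto simp: scalar_prod_def sum_distrib_left ac_simps)

lemma zero_mat_mult_vec [simp]: "x \<in> carrier_vec m \<Longrightarrow> 0\<^sub>m n m *\<^sub>v x = 0\<^sub>v n"
  by (rule eq_vecI) auto

lemma mat_mult_zero_vec [simp]: "A \<in> carrier_mat n m \<Longrightarrow> A *\<^sub>v 0\<^sub>v m = 0\<^sub>v n"
  by (rule eq_vecI) auto

lemma mat_adjoint_altdef:
  "mat_adjoint A = mat (dim_col A) (dim_row A) (\<lambda>(i, j). conjugate (A $$ (j, i)))"
  unfolding mat_adjoint_def mat_of_rows_def by (rule eq_matI) simp_all

lemma mat_adjoint_dim [simp]:
  "dim_row (mat_adjoint A) = dim_col A" "dim_col (mat_adjoint A) = dim_row A"
  unfolding mat_adjoint_altdef by simp_all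

lemma mat_adjoint_index [simp]:
  "i < dim_col A \<Longrightarrow> j < dim_row A \<Longrightarrow> mat_adjoint A $$ (i, j) = conjugate (A $$ (j, i))"
  unfolding mat_adjoint_altdef by simp

lemma mat_adjoint_carrier [simp]: "A \<in> carrier_mat n m \<Longrightarrow> mat_adjoint A \<in> carrier_mat m n"
  unfolding carrier_mat_def by simp

lemma mat_adjoint_adjoint [simp]: "mat_adjoint (mat_adjoint A) = A"
  by (rule eq_matI) simp_all

lemma mat_adjoint_mult:
  fixes A :: "'a :: conjugatable_field mat"
  assumes "A \<in> carrier_mat n k" "B \<in> carrier_mat k m"
  shows "mat_adjoint (A * B) = mat_adjoint B * mat_adjoint A"
  by (rule eq_matI, insert assms)
    (simp_all add: scalar_prod_def sum_conjugate conjugate_dist_mul mult.commute)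

lemma mat_adjoint_add:
  fixes A :: "'a :: conjugatable_field mat"
  assumes "A \<in> carrier_mat n m" "B \<in> carrier_mat n m"
  shows "mat_adjoint (A + B) = mat_adjoint A + mat_adjoint B"
  by (rule eq_matI, insert assms) (simp_all add: conjugate_dist_add)

lemma mat_adjoint_smult:
  "mat_adjoint (c \<cdot>\<^sub>m (A :: 'a :: conjugatable_field mat)) = conjugate c \<cdot>\<^sub>m mat_adjoint A"
  by (rule eq_matI) (simp_all add: conjugate_dist_mul)

lemma mat_adjoint_one [simp]: "mat_adjoint (1\<^sub>m n :: complex mat) = 1\<^sub>m n"
  by (rule eq_matI) simp_all

lemma mat_adjoint_zero [simp]: "mat_adjoint (0\<^sub>m n m :: 'a :: conjugatable_field mat) = 0\<^sub>m m n"
  by (rule eq_matI) simp_all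

lemma mat_adjoint_four_block_mat:
  fixes A :: "'a :: conjugatable_field mat"
  assumes "A \<in> carrier_mat nr1 nc1" "B \<in> carrier_mat nr1 nc2"
    "C \<in> carrier_mat nr2 nc1" "D \<in> carrier_mat nr2 nc2"
  shows "mat_adjoint (four_block_mat A B C D) =
    four_block_mat (mat_adjoint A) (mat_adjoint C) (mat_adjoint B) (mat_adjoint D)"
  by (rule eq_matI, insert assms) auto

lemma mult_unit_vec: "(M :: 'a :: semiring_1 mat) \<in> carrier_mat n m \<Longrightarrow> j < m \<Longrightarrow> M *\<^sub>v unit_vec m j = col M j"
  by (rule eq_vecI) auto

lemma mat_range_mult_subset:
  assumes "Y \<in> carrier_mat n q" "W \<in> carrier_mat q p"
  shows "mat_range (Y * W) \<subseteq> mat_range Y"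
proof
  fix v assume "v \<in> mat_range (Y * W)"
  then obtain x where x: "x \<in> carrier_vec p" and v: "v = (Y * W) *\<^sub>v x"
    unfolding mat_range_def using assms by auto
  have "v = Y *\<^sub>v (W *\<^sub>v x)" unfolding v using assms x by simp
  then show "v \<in> mat_range Y" unfolding mat_range_def using assms x by auto
qed

lemma mat_range_subset_imp_factor:
  assumes X: "X \<in> carrier_mat n p" and Y: "Y \<in> carrier_mat n q"
    and sub: "mat_range X \<subseteq> mat_range Y"
  obtains W where "W \<in> carrier_mat q p" "X = Y * W"
proof -
  have "\<exists>c. c \<in> carrier_vec q \<and> col X j = Y *\<^sub>v c" if j: "j < p" for j
  proof -
    have "col X j \<in> mat_range X"
      unfolding mat_range_def using X j mult_unit_vec[OF X j] by (auto intro!: exI[of _ "unit_vec p j"])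
    with sub show ?thesis unfolding mat_range_def using Y by auto
  qed
  then obtain f where f: "\<And>j. j < p \<Longrightarrow> f j \<in> carrier_vec q \<and> col X j = Y *\<^sub>v f j" by metis
  define W where "W = mat_of_cols q (map f [0..<p])"
  have W: "W \<in> carrier_mat q p" unfolding W_def by auto
  have "X = Y * W"
  proof (rule mat_col_eqI)
    fix j assume "j < dim_col (Y * W)"
    then have j: "j < p" using W by simp
    then have "col W j = f j" unfolding W_def using f by simp
    then show "col X j = col (Y * W) j" using f[OF j] col_mult2[OF Y W j] by simp
  qed (insert X Y W, auto)
  with W that show thesis by blast
qed

section \<open>Orthogonal projectors and the Moore--Penrose inverse\<close>

definition outer_prod :: "complex vec \<Rightarrow> complex vec \<Rightarrow> complex mat" where
  "outer_prod u v = mat (dim_vec u) (dim_vec v) (\<lambda>(i, j). u $ i * cnj (v $ j))"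

lemma outer_prod_carrier [simp]:
  "u \<in> carrier_vec n \<Longrightarrow> v \<in> carrier_vec m \<Longrightarrow> outer_prod u v \<in> carrier_mat n m"
  unfolding outer_prod_def by auto

lemma mult_outer_prod:
  assumes "M \<in> carrier_mat n n" "u \<in> carrier_vec n" "v \<in> carrier_vec n"
  shows "M * outer_prod u v = outer_prod (M *\<^sub>v u) v"
  by (rule eq_matI, insert assms)
    (auto simp: outer_prod_def scalar_prod_def sum_distrib_right intro!: sum.cong)

lemma outer_prod_mult:
  assumes "M \<in> carrier_mat n n" "u \<in> carrier_vec n" "v \<in> carrier_vec n"
  shows "outer_prod u v * M = outer_prod u (mat_adjoint M *\<^sub>v v)"
  by (rule eq_matI, insert assms)
    (auto simp: outer_prod_def scalar_prod_def sum_distrib_left intro!: sum.cong)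

lemma outer_prod_mult_outer_prod:
  assumes "u \<in> carrier_vec n" "v \<in> carrier_vec n" "x \<in> carrier_vec n" "y \<in> carrier_vec n"
  shows "outer_prod u v * outer_prod x y = (x \<bullet>c v) \<cdot>\<^sub>m outer_prod u y"
  by (rule eq_matI, insert assms)
    (auto simp: outer_prod_def scalar_prod_def sum_distrib_left sum_distrib_right ac_simps)

lemma outer_prod_mult_vec:
  assumes "u \<in> carrier_vec n" "v \<in> carrier_vec n" "x \<in> carrier_vec n"
  shows "outer_prod u v *\<^sub>v x = (x \<bullet>c v) \<cdot>\<^sub>v u"
  by (rule eq_vecI, insert assms) (auto simp: outer_prod_def scalar_prod_def sum_distrib_left ac_simps)

lemma mat_adjoint_outer_prod:
  "u \<in> carrier_vec n \<Longrightarrow> v \<in> carrier_vec n \<Longrightarrow> mat_adjoint (outer_prod u v) = outer_prod v u"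
  by (rule eq_matI) (auto simp: outer_prod_def)

lemma outer_prod_zero:
  "u \<in> carrier_vec n \<Longrightarrow> outer_prod u (0\<^sub>v m) = 0\<^sub>m n m"
  "v \<in> carrier_vec m \<Longrightarrow> outer_prod (0\<^sub>v n) v = 0\<^sub>m n m"
  by (rule eq_matI, auto simp: outer_prod_def)+

lemma orthogonal_projector_add:
  fixes P Q :: "complex mat"
  assumes P: "P \<in> carrier_mat n n" and Q: "Q \<in> carrier_mat n n"
    and adj: "mat_adjoint P = P" "mat_adjoint Q = Q" and idem: "P * P = P" "Q * Q = Q"
    and orth: "P * Q = 0\<^sub>m n n" "Q * P = 0\<^sub>m n n"
  shows "mat_adjoint (P + Q) = P + Q" "(P + Q) * (P + Q) = P + Q"
proof -
  show "mat_adjoint (P + Q) = P + Q" unfolding mat_adjoint_add[OF P Q] adj ..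
  have "(P + Q) * (P + Q) = P * P + P * Q + (Q * P + Q * Q)"
    unfolding add_mult_distrib_mat[OF P Q add_carrier_mat[OF Q, of P]]
      mult_add_distrib_mat[OF P P Q] mult_add_distrib_mat[OF Q P Q] ..
  then show "(P + Q) * (P + Q) = P + Q" unfolding idem orth using P Q by simp
qed

text \<open>The Gram--Schmidt step: \<open>P' = P + w w\<^sup>* / (w\<^sup>* w)\<close> with \<open>w = b - P b\<close>.\<close>

lemma orthogonal_projector_extend:
  fixes P :: "complex mat"
  assumes P: "P \<in> carrier_mat n n" and adjP: "mat_adjoint P = P" and PP: "P * P = P"
    and b: "b \<in> carrier_vec n" and w_nz: "b - P *\<^sub>v b \<noteq> 0\<^sub>v n"
  obtains P' where "P' \<in> carrier_mat n n" "mat_adjoint P' = P'" "P' * P' = P'" "P' *\<^sub>v b = b"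
    "\<And>v. v \<in> carrier_vec n \<Longrightarrow> P *\<^sub>v v = v \<Longrightarrow> P' *\<^sub>v v = v"
    "\<And>x. x \<in> carrier_vec n \<Longrightarrow> \<exists>a. P' *\<^sub>v x = P *\<^sub>v x + a \<cdot>\<^sub>v (b - P *\<^sub>v b)"
proof -
  define w where "w = b - P *\<^sub>v b"
  define s where "s = w \<bullet>c w"
  define Om where "Om = outer_prod w w"
  define c where "c = 1 / s"
  define P' where "P' = P + c \<cdot>\<^sub>m Om"
  have w: "w \<in> carrier_vec n" unfolding w_def using b P by auto
  have Om: "Om \<in> carrier_mat n n" and cOm: "c \<cdot>\<^sub>m Om \<in> carrier_mat n n"
    unfolding Om_def using w by simp_all
  have P': "P' \<in> carrier_mat n n" unfolding P'_def using P Om by simp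
  have s0: "s \<noteq> 0" unfolding s_def using w_nz w unfolding w_def by simp
  have ccs: "c * c * s = c" unfolding c_def using s0 by (simp add: field_simps)
  have cnj_c: "cnj c = c" unfolding c_def s_def by (simp add: scalar_prod_def mult.commute)
  have Pw: "P *\<^sub>v w = 0\<^sub>v n"
  proof -
    have "P *\<^sub>v (P *\<^sub>v b) = P *\<^sub>v b"
      using assoc_mult_mat_vec[OF P P b, symmetric] PP by simp
    then show ?thesis unfolding w_def using P b by (simp add: mult_minus_distrib_mat_vec)
  qed
  have POm: "P * Om = 0\<^sub>m n n"
    unfolding Om_def mult_outer_prod[OF P w w] Pw by (rule outer_prod_zero(2)[OF w])
  have OmP: "Om * P = 0\<^sub>m n n"
    unfolding Om_def outer_prod_mult[OF P w w] adjP Pw by (rule outer_prod_zero(1)[OF w])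
  have OmOm: "Om * Om = s \<cdot>\<^sub>m Om"
    unfolding Om_def outer_prod_mult_outer_prod[OF w w w w] s_def ..
  have OmPx: "Om *\<^sub>v (P *\<^sub>v x) = 0\<^sub>v n" if "x \<in> carrier_vec n" for x
    using assoc_mult_mat_vec[OF Om P that, symmetric] OmP that by simp
  have P'x: "P' *\<^sub>v x = P *\<^sub>v x + c \<cdot>\<^sub>v (Om *\<^sub>v x)" if "x \<in> carrier_vec n" for x
    unfolding P'_def using P Om that
    by (simp add: add_mult_distrib_mat_vec[of _ n n] smult_mat_mult_mat_vec_assoc)
  show thesis
  proof
    show "P' \<in> carrier_mat n n" by (rule P')
    have "mat_adjoint (c \<cdot>\<^sub>m Om) = c \<cdot>\<^sub>m Om"
      unfolding mat_adjoint_smult cnj_c[unfolded conjugate_complex_def[symmetric]]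
      by (simp add: Om_def mat_adjoint_outer_prod[OF w w])
    moreover have "P * (c \<cdot>\<^sub>m Om) = 0\<^sub>m n n" using mult_smult_distrib[OF P Om] POm by simp
    moreover have "(c \<cdot>\<^sub>m Om) * P = 0\<^sub>m n n" using mult_smult_assoc_mat[OF Om P] OmP by simp
    moreover have "(c \<cdot>\<^sub>m Om) * (c \<cdot>\<^sub>m Om) = c \<cdot>\<^sub>m Om"
    proof -
      have "(c \<cdot>\<^sub>m Om) * (c \<cdot>\<^sub>m Om) = c \<cdot>\<^sub>m (c \<cdot>\<^sub>m (s \<cdot>\<^sub>m Om))"
        using mult_smult_assoc_mat[OF Om cOm] mult_smult_distrib[OF Om Om] OmOm by simp
      also have "\<dots> = (c * c * s) \<cdot>\<^sub>m Om" by (rule eq_matI) (simp_all add: mult.assoc)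
      finally show ?thesis unfolding ccs .
    qed
    ultimately show "mat_adjoint P' = P'" "P' * P' = P'"
      unfolding P'_def using orthogonal_projector_add[OF P cOm adjP _ PP] by blast+
    have Omb: "Om *\<^sub>v b = s \<cdot>\<^sub>v w"
    proof -
      have "b = w + P *\<^sub>v b" unfolding w_def by (rule eq_vecI, insert b P, auto)
      then have "Om *\<^sub>v b = Om *\<^sub>v w + Om *\<^sub>v (P *\<^sub>v b)"
        using mult_add_distrib_mat_vec[OF Om w, of "P *\<^sub>v b"] P b by simp
      then show ?thesis using OmPx[OF b] w unfolding Om_def outer_prod_mult_vec[OF w w w] s_def by simp
    qed
    have "c * s = 1" using s0 by (simp add: c_def)
    then have "P' *\<^sub>v b = P *\<^sub>v b + w" unfolding P'x[OF b] Omb smult_smult_assoc by simp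
    then show "P' *\<^sub>v b = b" unfolding w_def by (intro eq_vecI) (use P b in auto)
    show "P' *\<^sub>v v = v" if v: "v \<in> carrier_vec n" and Pv: "P *\<^sub>v v = v" for v
      using P'x[OF v] OmPx[OF v] v unfolding Pv by (auto intro!: eq_vecI)
    show "\<exists>a. P' *\<^sub>v x = P *\<^sub>v x + a \<cdot>\<^sub>v (b - P *\<^sub>v b)" if x: "x \<in> carrier_vec n" for x
    proof -
      have "P' *\<^sub>v x = P *\<^sub>v x + (c * (x \<bullet>c w)) \<cdot>\<^sub>v w"
        using P'x[OF x] unfolding Om_def outer_prod_mult_vec[OF w w x] smult_smult_assoc .
      then show ?thesis unfolding w_def by blast
    qed
  qed
qed

lemma orthogonal_projector_onto_range:
  fixes M :: "complex mat"
  assumes M: "M \<in> carrier_mat n c"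
  obtains P where "P \<in> carrier_mat n n" "mat_adjoint P = P" "P * P = P" "P * M = M"
    "mat_range P \<subseteq> mat_range M"
proof -
  interpret V: vec_space "TYPE(complex)" n .
  have proj_span: "\<exists>P \<in> carrier_mat n n. mat_adjoint P = P \<and> P * P = P \<and> (\<forall>v \<in> set vs. P *\<^sub>v v = v)
      \<and> (\<forall>x \<in> carrier_vec n. P *\<^sub>v x \<in> V.span (set vs))"
    if "set vs \<subseteq> carrier_vec n" for vs
    using that
  proof (induction vs)
    case Nil
    have "0\<^sub>m n n *\<^sub>v x \<in> V.span (set [])" if "x \<in> carrier_vec n" for x
      using V.span_empty that by (simp add: module_vec_simps)
    then show ?case by (intro bexI[of _ "0\<^sub>m n n"]) auto
  next
    case (Cons b vs)
    then have b: "b \<in> carrier_vec n" and vs: "set vs \<subseteq> carrier_vec n" by auto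
    have bvs: "set (b # vs) \<subseteq> carrier_vec n" using Cons.prems .
    from Cons.IH[OF vs] obtain P where P: "P \<in> carrier_mat n n" "mat_adjoint P = P" "P * P = P"
      and fixed: "\<forall>v \<in> set vs. P *\<^sub>v v = v"
      and into: "\<forall>x \<in> carrier_vec n. P *\<^sub>v x \<in> V.span (set vs)" by blast
    have span_mono: "V.span (set vs) \<subseteq> V.span (set (b # vs))"
      by (rule V.span_is_monotone) auto
    have b_span: "b \<in> V.span (set (b # vs))"
      using V.in_own_span[of "set (b # vs)"] bvs by (auto simp: module_vec_simps)
    show ?case
    proof (cases "b - P *\<^sub>v b = 0\<^sub>v n")
      case True
      have "P *\<^sub>v b = b - (b - P *\<^sub>v b)" by (rule eq_vecI) (use P b in auto)
      with True have "P *\<^sub>v b = b" using b by simp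
      then show ?thesis using P fixed into span_mono by (intro bexI[of _ P]) auto
    next
      case False
      from orthogonal_projector_extend[OF P b False] obtain P' where
        P': "P' \<in> carrier_mat n n" "mat_adjoint P' = P'" "P' * P' = P'" "P' *\<^sub>v b = b"
        and keep: "\<And>v. v \<in> carrier_vec n \<Longrightarrow> P *\<^sub>v v = v \<Longrightarrow> P' *\<^sub>v v = v"
        and step: "\<And>x. x \<in> carrier_vec n \<Longrightarrow> \<exists>a. P' *\<^sub>v x = P *\<^sub>v x + a \<cdot>\<^sub>v (b - P *\<^sub>v b)"
        by blast
      have "P' *\<^sub>v x \<in> V.span (set (b # vs))" if x: "x \<in> carrier_vec n" for x
      proof -
        obtain a where "P' *\<^sub>v x = P *\<^sub>v x + a \<cdot>\<^sub>v (b - P *\<^sub>v b)" using step[OF x] by blast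
        also have "\<dots> = P *\<^sub>v x + (a \<cdot>\<^sub>v b + (- a) \<cdot>\<^sub>v (P *\<^sub>v b))"
          by (rule eq_vecI, insert P b x) (auto simp: algebra_simps)
        moreover have "P *\<^sub>v x \<in> V.span (set (b # vs))" using into x span_mono by auto
        moreover have "a \<cdot>\<^sub>v b \<in> V.span (set (b # vs))" by (rule V.smult_in_span[OF bvs b_span])
        moreover have "(- a) \<cdot>\<^sub>v (P *\<^sub>v b) \<in> V.span (set (b # vs))"
          using into b span_mono by (intro V.smult_in_span[OF bvs]) auto
        ultimately show ?thesis using V.span_add1[OF bvs] by (simp add: module_vec_simps)
      qed
      then show ?thesis using P' keep fixed vs by (intro bexI[of _ P']) auto
    qed
  qed
  have "set (cols M) \<subseteq> carrier_vec n" using M by (auto simp: cols_def)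
  from proj_span[OF this] obtain P where P: "P \<in> carrier_mat n n" "mat_adjoint P = P" "P * P = P"
    and fixed: "\<forall>v \<in> set (cols M). P *\<^sub>v v = v"
    and into: "\<forall>x \<in> carrier_vec n. P *\<^sub>v x \<in> V.span (set (cols M))"
    by blast
  have "P * M = M"
  proof (rule mat_col_eqI)
    fix i assume "i < dim_col M"
    then show "col (P * M) i = col M i"
      using col_mult2[OF P(1) M] fixed M by (simp add: cols_def)
  qed (use P M in auto)
  moreover have "mat_range P \<subseteq> mat_range M"
  proof
    have span_eq: "V.span (set (cols M)) = {y \<in> carrier_vec n. \<exists>x \<in> carrier_vec c. M *\<^sub>v x = y}"
      using V.col_space_eq[OF M] M unfolding V.col_space_def by simp
    fix v assume "v \<in> mat_range P"
    then obtain x where "x \<in> carrier_vec n" and "v = P *\<^sub>v x" unfolding mat_range_def using P by auto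
    then have "v \<in> V.span (set (cols M))" using into by simp
    then show "v \<in> mat_range M" unfolding span_eq mat_range_def using M by auto
  qed
  ultimately show thesis using that P by blast
qed

definition is_mp_inverse :: "complex mat \<Rightarrow> complex mat \<Rightarrow> bool" where
  "is_mp_inverse A X \<longleftrightarrow> A * X * A = A \<and> X * A * X = X \<and>
     mat_adjoint (A * X) = A * X \<and> mat_adjoint (X * A) = X * A"

lemma is_mp_inverse_exists:
  assumes A: "A \<in> carrier_mat n m"
  obtains X where "X \<in> carrier_mat m n" "is_mp_inverse A X"
proof -
  obtain P where P: "P \<in> carrier_mat n n" "mat_adjoint P = P" "P * P = P" "P * A = A"
    and range_P: "mat_range P \<subseteq> mat_range A"
    using orthogonal_projector_onto_range[OF A] by blast
  obtain Z where Z: "Z \<in> carrier_mat m n" and PZ: "P = A * Z"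
    using mat_range_subset_imp_factor[OF P(1) A range_P] by blast
  have A': "mat_adjoint A \<in> carrier_mat m n" using A by simp
  obtain Q where Q: "Q \<in> carrier_mat m m" "mat_adjoint Q = Q" "Q * Q = Q"
    "Q * mat_adjoint A = mat_adjoint A" and range_Q: "mat_range Q \<subseteq> mat_range (mat_adjoint A)"
    using orthogonal_projector_onto_range[OF A'] by blast
  obtain W where W: "W \<in> carrier_mat n m" and QW: "Q = mat_adjoint A * W"
    using mat_range_subset_imp_factor[OF Q(1) A' range_Q] by blast
  have AQ: "A * Q = A"
    using arg_cong[OF Q(4), of mat_adjoint] mat_adjoint_mult[OF Q(1) A'] Q(2) by simp
  have QWA: "Q = mat_adjoint W * A"
    using arg_cong[OF QW, of mat_adjoint] mat_adjoint_mult[OF A' W] Q(2) by simp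
  note dims = carrier_matD[OF A] carrier_matD[OF P(1)] carrier_matD[OF Z] carrier_matD[OF Q(1)]
    carrier_matD[OF W]
  define X where "X = Q * Z * P"
  have X: "X \<in> carrier_mat m n" unfolding X_def using Q Z P by auto
  have AX: "A * X = P"
  proof -
    have "A * X = (A * Q) * Z * P" using dims by (simp add: X_def mat_mult_assoc_dims)
    also have "\<dots> = P" unfolding AQ PZ[symmetric] P(3) ..
    finally show ?thesis .
  qed
  have XA: "X * A = Q"
  proof -
    have "X * A = mat_adjoint W * ((A * Z) * (P * A))"
      unfolding X_def QWA using dims by (simp add: mat_mult_assoc_dims)
    also have "\<dots> = Q" unfolding PZ[symmetric] P(4) QWA ..
    finally show ?thesis .
  qed
  have "X * A * X = Q * X" unfolding XA ..
  also have "\<dots> = (Q * Q) * Z * P" unfolding X_def using dims by (simp add: mat_mult_assoc_dims)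
  finally have "X * A * X = X" unfolding Q(3) X_def .
  then have "is_mp_inverse A X" unfolding is_mp_inverse_def AX XA using P(2,4) Q(2) by simp
  with X that show thesis by blast
qed

lemma is_mp_inverse_unique:
  assumes A: "A \<in> carrier_mat n m" and X: "X \<in> carrier_mat m n" and Y: "Y \<in> carrier_mat m n"
    and pX: "is_mp_inverse A X" and pY: "is_mp_inverse A Y"
  shows "X = Y"
proof -
  note dims = carrier_matD[OF A] carrier_matD[OF X] carrier_matD[OF Y]
  note ass = mat_mult_assoc_dims
  from pX have X1: "A * X * A = A" and X2: "X * A * X = X"
    and X3: "mat_adjoint X * mat_adjoint A = A * X" and X4: "mat_adjoint A * mat_adjoint X = X * A"
    unfolding is_mp_inverse_def mat_adjoint_mult[OF X A] mat_adjoint_mult[OF A X] by auto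
  from pY have Y1: "A * Y * A = A" and Y2: "Y * A * Y = Y"
    and Y3: "mat_adjoint Y * mat_adjoint A = A * Y" and Y4: "mat_adjoint A * mat_adjoint Y = Y * A"
    unfolding is_mp_inverse_def mat_adjoint_mult[OF Y A] mat_adjoint_mult[OF A Y] by auto
  have "mat_adjoint A = mat_adjoint (A * Y * A)" unfolding Y1 ..
  also have "\<dots> = mat_adjoint A * (mat_adjoint Y * mat_adjoint A)"
    unfolding mat_adjoint_mult[OF mult_carrier_mat[OF A Y] A] mat_adjoint_mult[OF A Y] ..
  finally have AY: "mat_adjoint A = mat_adjoint A * (A * Y)" unfolding Y3 .
  have "mat_adjoint A = mat_adjoint (A * X * A)" unfolding X1 ..
  also have "\<dots> = mat_adjoint A * mat_adjoint X * mat_adjoint A"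
    unfolding mat_adjoint_mult[OF mult_carrier_mat[OF A X] A] mat_adjoint_mult[OF A X]
    using dims by (simp add: ass)
  finally have XA: "mat_adjoint A = X * A * mat_adjoint A" unfolding X4 .
  have "X = X * (A * X)" using X2 dims by (simp add: ass)
  also have "\<dots> = X * (mat_adjoint X * mat_adjoint A)" unfolding X3 ..
  also have "\<dots> = X * (mat_adjoint X * (mat_adjoint A * (A * Y)))" by (subst AY) (rule refl)
  also have "\<dots> = X * ((mat_adjoint X * mat_adjoint A) * (A * Y))" using dims by (simp add: ass)
  also have "\<dots> = (X * A * X) * A * Y" unfolding X3 using dims by (simp add: ass)
  finally have XY: "X = X * A * Y" unfolding X2 .
  have "Y = (Y * A) * Y" using Y2 by simp
  also have "\<dots> = (mat_adjoint A * mat_adjoint Y) * Y" unfolding Y4 ..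
  also have "\<dots> = ((X * A * mat_adjoint A) * mat_adjoint Y) * Y" by (subst XA) (rule refl)
  also have "\<dots> = X * A * ((mat_adjoint A * mat_adjoint Y) * Y)" using dims by (simp add: ass)
  also have "\<dots> = X * A * Y" unfolding Y4 Y2 ..
  finally show ?thesis using XY by simp
qed

lemma mp_inverse_eqI:
  assumes A: "A \<in> carrier_mat n m" and X: "X \<in> carrier_mat m n" and pX: "is_mp_inverse A X"
  shows "mp_inverse A = X"
  unfolding mp_inverse_def
proof (rule the_equality)
  show "X \<in> carrier_mat (dim_col A) (dim_row A) \<and> A * X * A = A \<and> X * A * X = X \<and>
    mat_adjoint (A * X) = A * X \<and> mat_adjoint (X * A) = X * A"
    using X pX unfolding is_mp_inverse_def carrier_matD[OF A] by blast
  fix Y assume "Y \<in> carrier_mat (dim_col A) (dim_row A) \<and> A * Y * A = A \<and> Y * A * Y = Y \<and>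
    mat_adjoint (A * Y) = A * Y \<and> mat_adjoint (Y * A) = Y * A"
  then have "Y \<in> carrier_mat m n" "is_mp_inverse A Y" using A unfolding is_mp_inverse_def by auto
  then show "Y = X" using is_mp_inverse_unique[OF A _ X _ pX] by blast
qed

lemma mp_inverse_carrier:
  assumes "A \<in> carrier_mat n m"
  shows "mp_inverse A \<in> carrier_mat m n"
  by (rule is_mp_inverse_exists[OF assms]) (auto simp: mp_inverse_eqI[OF assms])

lemma is_mp_inverse_mp_inverse:
  assumes "A \<in> carrier_mat n m"
  shows "is_mp_inverse A (mp_inverse A)"
  by (rule is_mp_inverse_exists[OF assms]) (auto simp: mp_inverse_eqI[OF assms])

lemma proj_carrier: "A \<in> carrier_mat n m \<Longrightarrow> proj A \<in> carrier_mat n n"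
  unfolding proj_def using mp_inverse_carrier by auto

lemma mat_adjoint_proj: "A \<in> carrier_mat n m \<Longrightarrow> mat_adjoint (proj A) = proj A"
  using is_mp_inverse_mp_inverse unfolding proj_def is_mp_inverse_def by blast

lemma proj_mult_self: "A \<in> carrier_mat n m \<Longrightarrow> proj A * A = A"
  using is_mp_inverse_mp_inverse unfolding proj_def is_mp_inverse_def by blast

lemma mult_proj_eq_if_mult_eq:
  assumes M: "M \<in> carrier_mat n m" and X: "X \<in> carrier_mat p n" and Y: "Y \<in> carrier_mat p n"
    and eq: "X * M = Y * M"
  shows "X * proj M = Y * proj M"
proof -
  have Mp: "mp_inverse M \<in> carrier_mat m n" by (rule mp_inverse_carrier[OF M])
  have "X * proj M = (X * M) * mp_inverse M"
    unfolding proj_def using X M Mp by (simp add: assoc_mult_mat[of _ p n _ m _ n])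
  also have "\<dots> = Y * proj M"
    unfolding eq proj_def using Y M Mp by (simp add: assoc_mult_mat[of _ p n _ m _ n])
  finally show ?thesis .
qed

lemma mult_proj_eq_self_if_factor:
  assumes M: "M \<in> carrier_mat n m" and G: "G \<in> carrier_mat p m"
  shows "G * mat_adjoint M * proj M = G * mat_adjoint M"
proof -
  have P: "proj M \<in> carrier_mat n n" by (rule proj_carrier[OF M])
  have "mat_adjoint M * proj M = mat_adjoint (proj M * M)"
    using mat_adjoint_mult[OF P M] mat_adjoint_proj[OF M] by simp
  then show ?thesis
    using G M P proj_mult_self[OF M] by (simp add: assoc_mult_mat[of _ p m _ n _ n])
qed

lemma mult_proj_eq_0_iff:
  assumes M: "M \<in> carrier_mat n m" and X: "X \<in> carrier_mat p n"
  shows "X * proj M = 0\<^sub>m p n \<longleftrightarrow> X * M = 0\<^sub>m p m"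
proof
  have Mp: "mp_inverse M \<in> carrier_mat m n" by (rule mp_inverse_carrier[OF M])
  have P: "proj M \<in> carrier_mat n n" by (rule proj_carrier[OF M])
  show "X * M = 0\<^sub>m p m" if "X * proj M = 0\<^sub>m p n"
  proof -
    have "X * M = (X * proj M) * M"
      using proj_mult_self[OF M] X P M by (simp add: assoc_mult_mat[of _ p n _ n _ m])
    then show ?thesis using that M by simp
  qed
  show "X * proj M = 0\<^sub>m p n" if "X * M = 0\<^sub>m p m"
  proof -
    have "X * proj M = (X * M) * mp_inverse M"
      unfolding proj_def using X M Mp by (simp add: assoc_mult_mat[of _ p n _ m _ n])
    then show ?thesis using that Mp by simp
  qed
qed

lemma proj_mult_vec_kernel_adjoint:
  assumes M: "M \<in> carrier_mat n m" and v: "v \<in> mat_kernel (mat_adjoint M)"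
  shows "proj M *\<^sub>v v = 0\<^sub>v n"
proof -
  have Mp: "mp_inverse M \<in> carrier_mat m n" by (rule mp_inverse_carrier[OF M])
  from v have v: "v \<in> carrier_vec n" and Mv: "mat_adjoint M *\<^sub>v v = 0\<^sub>v m"
    unfolding mat_kernel_def using M by auto
  have "proj M = mat_adjoint (mp_inverse M) * mat_adjoint M"
    using mat_adjoint_proj[OF M] mat_adjoint_mult[OF M Mp] unfolding proj_def by simp
  then show ?thesis using Mv v Mp M by (simp add: assoc_mult_mat_vec[of _ n m _ n])
qed

lemma mult_proj_eq_self_iff:
  assumes M: "M \<in> carrier_mat n m" and X: "X \<in> carrier_mat p n"
  shows "X * proj M = X \<longleftrightarrow> mat_kernel (mat_adjoint M) \<subseteq> mat_kernel X"
proof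
  have P: "proj M \<in> carrier_mat n n" by (rule proj_carrier[OF M])
  assume XP: "X * proj M = X"
  show "mat_kernel (mat_adjoint M) \<subseteq> mat_kernel X"
  proof
    fix v assume v: "v \<in> mat_kernel (mat_adjoint M)"
    then have vc: "v \<in> carrier_vec n" unfolding mat_kernel_def using M by simp
    have "X *\<^sub>v v = 0\<^sub>v p"
      using assoc_mult_mat_vec[OF X P vc] proj_mult_vec_kernel_adjoint[OF M v] XP X by simp
    then show "v \<in> mat_kernel X" using vc X by (simp add: mat_kernel_def)
  qed
next
  have P: "proj M \<in> carrier_mat n n" by (rule proj_carrier[OF M])
  have M': "mat_adjoint M \<in> carrier_mat m n" using M by simp
  assume ker: "mat_kernel (mat_adjoint M) \<subseteq> mat_kernel X"
  define R where "R = 1\<^sub>m n - proj M"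
  have R: "R \<in> carrier_mat n n" unfolding R_def using minus_carrier_mat[OF P] by simp
  have "mat_adjoint M * proj M = mat_adjoint M"
    using mult_proj_eq_self_if_factor[OF M one_carrier_mat] M by simp
  then have "mat_adjoint M * R = 0\<^sub>m m n"
    unfolding R_def mult_minus_distrib_mat[OF M' one_carrier_mat P] using M' by (simp add: right_mult_one_mat[OF M'])
  then have col_ker: "col R j \<in> mat_kernel X" if j: "j < n" for j
  proof -
    have "mat_adjoint M *\<^sub>v col R j = 0\<^sub>v m"
      using arg_cong[OF \<open>mat_adjoint M * R = 0\<^sub>m m n\<close>, of "\<lambda>A. col A j"] col_mult2[OF M' R j] j
      by simp
    then have "col R j \<in> mat_kernel (mat_adjoint M)" using j R M by (simp add: mat_kernel_def)
    then show ?thesis using ker by blast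
  qed
  then have "X * R = 0\<^sub>m p n"
  proof (intro mat_col_eqI)
    fix j assume "j < dim_col (0\<^sub>m p n)"
    then have j: "j < n" by simp
    show "col (X * R) j = col (0\<^sub>m p n) j"
      using col_ker[OF j] col_mult2[OF X R j] X j by (simp add: mat_kernel_def)
  qed (use X R in auto)
  then have D: "X - X * proj M = 0\<^sub>m p n"
    unfolding R_def mult_minus_distrib_mat[OF X one_carrier_mat P] using X by simp
  show "X * proj M = X"
  proof (rule eq_matI)
    fix i j assume "i < dim_row X" "j < dim_col X"
    then show "(X * proj M) $$ (i, j) = X $$ (i, j)"
      using arg_cong[OF D, of "\<lambda>A. A $$ (i, j)"] X P by simp
  qed (use X P in simp_all)
qed

lemma pow_mat_add: "A \<in> carrier_mat n n \<Longrightarrow> A ^\<^sub>m (a + b) = A ^\<^sub>m a * A ^\<^sub>m b"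
  by (induction b) (simp_all add: assoc_mult_mat[of _ n n _ n _ n])

lemma pow_mat_Suc_left: "A \<in> carrier_mat n n \<Longrightarrow> A ^\<^sub>m Suc k = A * A ^\<^sub>m k"
  using pow_mat_add[of A n 1 k] by simp

lemma pow_mat_mult_pow_mat_right_inverse:
  assumes T: "T \<in> carrier_mat t t" and T': "T' \<in> carrier_mat t t" and TT': "T * T' = 1\<^sub>m t"
  shows "T ^\<^sub>m a * T' ^\<^sub>m b = (if b \<le> a then T ^\<^sub>m (a - b) else T' ^\<^sub>m (b - a))"
proof (induction b)
  case (Suc b)
  have "T ^\<^sub>m a * T' ^\<^sub>m Suc b = (T ^\<^sub>m a * T' ^\<^sub>m b) * T'"
    using T T' by (simp add: assoc_mult_mat[of _ t t _ t _ t])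
  also have "\<dots> = (if Suc b \<le> a then T ^\<^sub>m (a - Suc b) else T' ^\<^sub>m (Suc b - a))"
  proof (cases "b < a")
    case True
    then obtain d where d: "a - b = Suc d" "a - Suc b = d" by (cases "a - b") auto
    have "T ^\<^sub>m (a - b) * T' = T ^\<^sub>m d * (T * T')"
      unfolding d using T T' by (simp add: assoc_mult_mat[of _ t t _ t _ t])
    then show ?thesis using Suc True d TT' T by simp
  next
    case False
    then show ?thesis using Suc T T' by (simp add: Suc_diff_le)
  qed
  finally show ?case .
qed (use T T' in simp)

lemma mat_inv:
  assumes T: "T \<in> carrier_mat t t" and inv: "invertible_mat T"
  shows "mat_inv T \<in> carrier_mat t t" "T * mat_inv T = 1\<^sub>m t" "mat_inv T * T = 1\<^sub>m t"
proof -
  obtain B where TB: "T * B = 1\<^sub>m t" and BT: "B * T = 1\<^sub>m (dim_row B)"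
    using inv T unfolding invertible_mat_def inverts_mat_def by auto
  have B: "B \<in> carrier_mat t t"
    using arg_cong[OF TB, of dim_col] arg_cong[OF BT, of dim_col] T by auto
  have "mat_inv T = B"
    unfolding mat_inv_def
  proof (rule the_equality)
    fix B' assume "B' \<in> carrier_mat (dim_row T) (dim_row T) \<and>
      T * B' = 1\<^sub>m (dim_row T) \<and> B' * T = 1\<^sub>m (dim_row T)"
    then have B': "B' \<in> carrier_mat t t" and B'T: "B' * T = 1\<^sub>m t" using T by auto
    have "B' = B' * (T * B)" using TB B' by simp
    also have "\<dots> = (B' * T) * B" using B' T B by (simp add: assoc_mult_mat[of _ t t _ t _ t])
    finally show "B' = B" using B'T B by simp
  qed (use B TB BT T in simp)
  then show "mat_inv T \<in> carrier_mat t t" "T * mat_inv T = 1\<^sub>m t" "mat_inv T * T = 1\<^sub>m t"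
    using B TB BT by auto
qed

lemma mat_ipow_diff:
  assumes "T \<in> carrier_mat t t" "invertible_mat T"
  shows "mat_ipow T (int a - int b) = T ^\<^sub>m a * mat_inv T ^\<^sub>m b"
  using pow_mat_mult_pow_mat_right_inverse[OF assms(1) mat_inv(1,2)[OF assms], of a b]
  by (auto simp: mat_ipow_def nat_diff_distrib)

section \<open>Characterisations of the core-EP and Drazin inverses\<close>

lemma core_ep_eqI:
  assumes A: "A \<in> carrier_mat n n" and X: "X \<in> carrier_mat n n" and XAX: "X * A * X = X"
    and range: "mat_range X = mat_range (A ^\<^sub>m mat_index A)"
    and range_adj: "mat_range (mat_adjoint X) = mat_range (A ^\<^sub>m mat_index A)"
  shows "core_ep A = X"
  unfolding core_ep_def
proof (rule the_equality)
  fix Y assume "Y \<in> carrier_mat (dim_row A) (dim_row A) \<and> Y * A * Y = Y \<and>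
    mat_range Y = mat_range (A ^\<^sub>m mat_index A) \<and>
    mat_range (mat_adjoint Y) = mat_range (A ^\<^sub>m mat_index A)"
  then have Y: "Y \<in> carrier_mat n n" and YAY: "Y * A * Y = Y"
    and rY: "mat_range X \<subseteq> mat_range Y" and rY': "mat_range (mat_adjoint Y) \<subseteq> mat_range (mat_adjoint X)"
    using A range range_adj by auto
  obtain W where W: "W \<in> carrier_mat n n" and XW: "X = Y * W"
    using mat_range_subset_imp_factor[OF X Y rY] by blast
  obtain V where V: "V \<in> carrier_mat n n" and YV: "mat_adjoint Y = mat_adjoint X * V"
    using mat_range_subset_imp_factor[OF _ _ rY'] X Y by (metis mat_adjoint_carrier)
  have YV': "Y = mat_adjoint V * X"
    using arg_cong[OF YV, of mat_adjoint] mat_adjoint_mult[of "mat_adjoint X" n n V n] X V by simp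
  note ass = assoc_mult_mat[of _ n n _ n _ n]
  have "Y * A * X = (Y * A * Y) * W" unfolding XW using Y A W by (simp add: ass)
  then have "Y * A * X = X" unfolding YAY XW .
  moreover have "Y * A * X = mat_adjoint V * (X * A * X)" unfolding YV' using V X A by (simp add: ass)
  ultimately show "Y = X" unfolding XAX YV' by simp
qed (use A X XAX range range_adj in auto)

lemma pow_mat_commute:
  assumes A: "A \<in> carrier_mat n n" and X: "X \<in> carrier_mat n n" and comm: "A * X = X * A"
  shows "A ^\<^sub>m j * X = X * A ^\<^sub>m j"
proof (induction j)
  case (Suc j)
  have "A ^\<^sub>m Suc j * X = A ^\<^sub>m j * (A * X)"
    unfolding pow_mat.simps(2) by (rule assoc_mult_mat[OF pow_carrier_mat[OF A] A X])
  also have "\<dots> = (A ^\<^sub>m j * X) * A"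
    unfolding comm by (rule assoc_mult_mat[OF pow_carrier_mat[OF A] X A, symmetric])
  also have "\<dots> = X * A ^\<^sub>m Suc j"
    unfolding Suc pow_mat.simps(2) by (rule assoc_mult_mat[OF X pow_carrier_mat[OF A] A])
  finally show ?case .
qed (use left_mult_one_mat[OF X] right_mult_one_mat[OF X] carrier_matD[OF A] in simp)

lemma reflexive_commuting_inverse_pow:
  assumes A: "A \<in> carrier_mat n n" and X: "X \<in> carrier_mat n n"
    and XAX: "X * A * X = X" and comm: "A * X = X * A"
  shows "X = X ^\<^sub>m Suc j * A ^\<^sub>m j" "X = A ^\<^sub>m j * X ^\<^sub>m Suc j"
proof -
  note dims = carrier_matD[OF A] carrier_matD[OF X]
    carrier_matD[OF pow_carrier_mat[OF A]] carrier_matD[OF pow_carrier_mat[OF X]]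
  have XXA: "X * X * A = X"
  proof -
    have "X * X * A = X * (X * A)" by (rule assoc_mult_mat[OF X X A])
    also have "\<dots> = X * (A * X)" unfolding comm ..
    also have "\<dots> = X * A * X" by (rule assoc_mult_mat[OF X A X, symmetric])
    finally show ?thesis unfolding XAX .
  qed
  have AXX: "A * X * X = X" using XAX unfolding comm[symmetric] .
  show "X = X ^\<^sub>m Suc j * A ^\<^sub>m j"
  proof (induction j)
    case (Suc j)
    have "X ^\<^sub>m Suc (Suc j) * A ^\<^sub>m Suc j = X * (X ^\<^sub>m Suc j * A ^\<^sub>m j) * A"
      unfolding pow_mat_Suc_left[OF X, of "Suc j"] pow_mat.simps(2)[of A j]
      using dims by (simp add: mat_mult_assoc_dims)
    then show ?case unfolding Suc[symmetric] XXA ..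
  qed (use right_mult_one_mat[OF X] carrier_matD[OF A] in simp)
  show "X = A ^\<^sub>m j * X ^\<^sub>m Suc j"
  proof (induction j)
    case (Suc j)
    have "A ^\<^sub>m Suc j * X ^\<^sub>m Suc (Suc j) = A * (A ^\<^sub>m j * X ^\<^sub>m Suc j) * X"
      unfolding pow_mat_Suc_left[OF A, of j] pow_mat.simps(2)[of X "Suc j"]
      using dims by (simp add: mat_mult_assoc_dims)
    then show ?case unfolding Suc[symmetric] AXX ..
  qed (use left_mult_one_mat[OF X] carrier_matD[OF A] carrier_matD[OF X] in simp)
qed

lemma drazin_eqI:
  assumes A: "A \<in> carrier_mat n n" and X: "X \<in> carrier_mat n n"
    and XAX: "X * A * X = X" and comm: "A * X = X * A"
    and XA: "X * A ^\<^sub>m Suc (mat_index A) = A ^\<^sub>m mat_index A"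
  shows "drazin A = X"
  unfolding drazin_def
proof (rule the_equality)
  fix Y assume "Y \<in> carrier_mat (dim_row A) (dim_row A) \<and> Y * A * Y = Y \<and> A * Y = Y * A \<and>
    Y * A ^\<^sub>m Suc (mat_index A) = A ^\<^sub>m mat_index A"
  then have Y: "Y \<in> carrier_mat n n" and YAY: "Y * A * Y = Y" and commY: "A * Y = Y * A"
    and YA: "Y * A ^\<^sub>m Suc (mat_index A) = A ^\<^sub>m mat_index A" using A by auto
  define k where "k = mat_index A"
  note dims = carrier_matD[OF A] carrier_matD[OF X] carrier_matD[OF Y]
    carrier_matD[OF pow_carrier_mat[OF A]] carrier_matD[OF pow_carrier_mat[OF X]]
    carrier_matD[OF pow_carrier_mat[OF Y]]
  note X_pow = reflexive_commuting_inverse_pow(1)[OF A X XAX comm, of k]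
  note Y_pow = reflexive_commuting_inverse_pow(2)[OF A Y YAY commY, of k]
  have "X = X ^\<^sub>m Suc k * (Y * A ^\<^sub>m Suc k)" using X_pow YA unfolding k_def by simp
  also have "\<dots> = (X ^\<^sub>m Suc k * A ^\<^sub>m k) * A * Y"
    unfolding pow_mat_commute[OF A Y commY, symmetric] unfolding pow_mat.simps(2)[of A k]
    using dims by (simp add: mat_mult_assoc_dims)
  finally have XY: "X = X * A * Y" unfolding X_pow[symmetric] .
  have "Y = (X * A ^\<^sub>m Suc k) * Y ^\<^sub>m Suc k" using Y_pow XA unfolding k_def by simp
  also have "\<dots> = X * A * (A ^\<^sub>m k * Y ^\<^sub>m Suc k)"
    unfolding pow_mat_Suc_left[OF A] using dims by (simp add: mat_mult_assoc_dims)
  finally show "Y = X" unfolding Y_pow[symmetric] using XY by simp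
qed (use A X XAX comm XA in auto)

locale unitary_similarity =
  fixes U :: "complex mat" and n :: nat
  assumes U: "U \<in> carrier_mat n n" and unitary: "mat_adjoint U * U = 1\<^sub>m n"
begin

definition uconj :: "complex mat \<Rightarrow> complex mat" where
  "uconj X = U * X * mat_adjoint U"

lemma U_adjoint: "mat_adjoint U \<in> carrier_mat n n"
  using U by simp

lemma unitary': "U * mat_adjoint U = 1\<^sub>m n"
  using mat_mult_left_right_inverse[OF U_adjoint U unitary] .

lemma uconj_carrier [simp]: "X \<in> carrier_mat n n \<Longrightarrow> uconj X \<in> carrier_mat n n"
  unfolding uconj_def using U U_adjoint by (intro mult_carrier_mat_square)

lemma uconj_mult:
  assumes X: "X \<in> carrier_mat n n" and Y: "Y \<in> carrier_mat n n"
  shows "uconj X * uconj Y = uconj (X * Y)"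
proof -
  note ass = assoc_mult_mat[of _ n n _ n _ n]
  have "uconj X * uconj Y = U * (X * ((mat_adjoint U * U) * (Y * mat_adjoint U)))"
    unfolding uconj_def using U U_adjoint X Y by (simp add: ass)
  also have "\<dots> = uconj (X * Y)"
    unfolding uconj_def unitary using U U_adjoint X Y by (simp add: ass)
  finally show ?thesis .
qed

lemma uconj_inj_iff:
  assumes X: "X \<in> carrier_mat n n" and Y: "Y \<in> carrier_mat n n"
  shows "uconj X = uconj Y \<longleftrightarrow> X = Y"
proof
  have recover: "mat_adjoint U * uconj Z * U = Z" if Z: "Z \<in> carrier_mat n n" for Z
  proof -
    have "mat_adjoint U * uconj Z * U = (mat_adjoint U * U) * (Z * (mat_adjoint U * U))"
      unfolding uconj_def using U U_adjoint Z
      by (simp add: assoc_mult_mat[of _ n n _ n _ n] mult_carrier_mat_square)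
    then show ?thesis unfolding unitary using Z by simp
  qed
  show "X = Y" if "uconj X = uconj Y" using recover[OF X] recover[OF Y] that by metis
qed simp

lemma uconj_adjoint: "X \<in> carrier_mat n n \<Longrightarrow> mat_adjoint (uconj X) = uconj (mat_adjoint X)"
  unfolding uconj_def using U U_adjoint
  by (simp add: mat_adjoint_mult[of _ n n _ n] assoc_mult_mat[of _ n n _ n _ n])

lemma uconj_one: "uconj (1\<^sub>m n) = 1\<^sub>m n"
  unfolding uconj_def using U unitary' by simp

lemma uconj_pow: "X \<in> carrier_mat n n \<Longrightarrow> uconj X ^\<^sub>m j = uconj (X ^\<^sub>m j)"
  by (induction j) (simp_all add: uconj_one uconj_mult carrier_matD(1)[OF uconj_carrier])

lemma uconj_mp_inverse: "X \<in> carrier_mat n n \<Longrightarrow> mp_inverse (uconj X) = uconj (mp_inverse X)"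
  using is_mp_inverse_mp_inverse[of X n n] mp_inverse_carrier[of X n n]
  by (intro mp_inverse_eqI[of _ n n]) (auto simp: is_mp_inverse_def uconj_mult uconj_adjoint)

lemma uconj_proj: "X \<in> carrier_mat n n \<Longrightarrow> proj (uconj X) = uconj (proj X)"
  unfolding proj_def by (simp add: uconj_mp_inverse uconj_mult mp_inverse_carrier)

end

section \<open>Block upper triangular matrices\<close>

lemma four_block_mat_inject:
  assumes "A \<in> carrier_mat nr1 nc1" "A' \<in> carrier_mat nr1 nc1"
    "B \<in> carrier_mat nr1 nc2" "B' \<in> carrier_mat nr1 nc2"
    "C \<in> carrier_mat nr2 nc1" "C' \<in> carrier_mat nr2 nc1"
    "D \<in> carrier_mat nr2 nc2" "D' \<in> carrier_mat nr2 nc2"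
  shows "four_block_mat A B C D = four_block_mat A' B' C' D' \<longleftrightarrow> A = A' \<and> B = B' \<and> C = C' \<and> D = D'"
proof (intro iffI conjI)
  assume eq: "four_block_mat A B C D = four_block_mat A' B' C' D'"
  have e: "four_block_mat A B C D $$ (i, j) = four_block_mat A' B' C' D' $$ (i, j)" for i j
    using eq by simp
  show "A = A'"
  proof (rule eq_matI)
    fix i j assume "i < dim_row A'" "j < dim_col A'"
    then show "A $$ (i, j) = A' $$ (i, j)" using e[of i j] assms by auto
  qed (use assms in auto)
  show "B = B'"
  proof (rule eq_matI)
    fix i j assume "i < dim_row B'" "j < dim_col B'"
    then show "B $$ (i, j) = B' $$ (i, j)" using e[of i "j + nc1"] assms by auto
  qed (use assms in auto)
  show "C = C'"
  proof (rule eq_matI)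
    fix i j assume "i < dim_row C'" "j < dim_col C'"
    then show "C $$ (i, j) = C' $$ (i, j)" using e[of "i + nr1" j] assms by auto
  qed (use assms in auto)
  show "D = D'"
  proof (rule eq_matI)
    fix i j assume "i < dim_row D'" "j < dim_col D'"
    then show "D $$ (i, j) = D' $$ (i, j)" using e[of "i + nr1" "j + nc1"] assms by auto
  qed (use assms in auto)
qed auto

lemma mult_four_block_mat_upper:
  assumes "T1 \<in> carrier_mat t t" "T2 \<in> carrier_mat t t" "R1 \<in> carrier_mat t r"
    "R2 \<in> carrier_mat t r" "L1 \<in> carrier_mat r r" "L2 \<in> carrier_mat r r"
  shows "four_block_mat T1 R1 (0\<^sub>m r t) L1 * four_block_mat T2 R2 (0\<^sub>m r t) (L2 :: 'a :: semiring_1 mat) =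
    four_block_mat (T1 * T2) (T1 * R2 + R1 * L2) (0\<^sub>m r t) (L1 * L2)"
  by (subst mult_four_block_mat[OF assms(1,3) zero_carrier_mat assms(5,2,4) zero_carrier_mat assms(6)])
    (use assms in simp)

abbreviation top_block :: "nat \<Rightarrow> nat \<Rightarrow> complex mat \<Rightarrow> complex mat \<Rightarrow> complex mat" where
  "top_block t r V W \<equiv> four_block_mat V W (0\<^sub>m r t) (0\<^sub>m r r)"

lemma top_block_mult_four_block_mat:
  assumes "V \<in> carrier_mat t t" "T \<in> carrier_mat t t" "W \<in> carrier_mat t r"
    "R \<in> carrier_mat t r" "L \<in> carrier_mat r r"
  shows "top_block t r V W * four_block_mat T R (0\<^sub>m r t) L = top_block t r (V * T) (V * R + W * L)"
  using mult_four_block_mat_upper[OF assms(1,2,3,4) zero_carrier_mat assms(5)] assms by simp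

lemma four_block_mat_mult_top_block:
  assumes "V \<in> carrier_mat t t" "T \<in> carrier_mat t t" "W \<in> carrier_mat t r"
    "R \<in> carrier_mat t r" "L \<in> carrier_mat r r"
  shows "four_block_mat T R (0\<^sub>m r t) L * top_block t r V W = top_block t r (T * V) (T * W)"
  using mult_four_block_mat_upper[OF assms(2,1,4,3,5) zero_carrier_mat] assms by simp

lemma top_block_mult:
  assumes "V1 \<in> carrier_mat t t" "V2 \<in> carrier_mat t t" "W1 \<in> carrier_mat t r" "W2 \<in> carrier_mat t r"
  shows "top_block t r V1 W1 * top_block t r V2 W2 = top_block t r (V1 * V2) (V1 * W2)"
  using top_block_mult_four_block_mat[OF assms(1,2,3,4) zero_carrier_mat] assms by simp

lemma mat_adjoint_top_block:
  assumes "V \<in> carrier_mat t t" "W \<in> carrier_mat t r"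
  shows "mat_adjoint (top_block t r V W) =
    four_block_mat (mat_adjoint V) (0\<^sub>m t r) (mat_adjoint W) (0\<^sub>m r r)"
  using mat_adjoint_four_block_mat[OF assms zero_carrier_mat zero_carrier_mat] by simp

lemma top_block_eq_iff:
  assumes "V \<in> carrier_mat t t" "V' \<in> carrier_mat t t" "W \<in> carrier_mat t r" "W' \<in> carrier_mat t r"
  shows "top_block t r V W = top_block t r V' W' \<longleftrightarrow> V = V' \<and> W = W'"
  using four_block_mat_inject[OF assms zero_carrier_mat zero_carrier_mat zero_carrier_mat
      zero_carrier_mat] by simp

text \<open>Both sides agree on the range of \<open>M = [T R; 0 L]\<close> because \<open>P\<^sub>L L = L\<close>; and since \<open>T\<close> is
  invertible, the rows of \<open>[V (W P\<^sub>L); 0 0]\<close> lie in the row space of \<open>M\<close>, on which \<open>P\<^sub>M\<close>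
  acts trivially.\<close>

lemma top_block_mult_proj:
  assumes V: "V \<in> carrier_mat t t" and W: "W \<in> carrier_mat t r"
    and T: "T \<in> carrier_mat t t" and T': "T' \<in> carrier_mat t t" and TT': "T * T' = 1\<^sub>m t"
    and R: "R \<in> carrier_mat t r" and L: "L \<in> carrier_mat r r"
  shows "top_block t r V W * proj (four_block_mat T R (0\<^sub>m r t) L) = top_block t r V (W * proj L)"
proof -
  define M where "M = four_block_mat T R (0\<^sub>m r t) L"
  have M: "M \<in> carrier_mat (t + r) (t + r)" unfolding M_def using T L by simp
  have Q: "proj L \<in> carrier_mat r r" by (rule proj_carrier[OF L])
  have Lp: "mp_inverse L \<in> carrier_mat r r" by (rule mp_inverse_carrier[OF L])
  have WQ: "W * proj L \<in> carrier_mat t r" using W Q by simp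
  have "top_block t r V W * M = top_block t r V (W * proj L) * M"
    unfolding M_def top_block_mult_four_block_mat[OF V T W R L] top_block_mult_four_block_mat[OF V T WQ R L]
    using W Q L proj_mult_self[OF L] by (simp add: assoc_mult_mat[of _ t r _ r _ r])
  moreover have "top_block t r V W \<in> carrier_mat (t + r) (t + r)"
    "top_block t r V (W * proj L) \<in> carrier_mat (t + r) (t + r)" using V by simp_all
  ultimately have "top_block t r V W * proj M = top_block t r V (W * proj L) * proj M"
    using mult_proj_eq_if_mult_eq[OF M] by blast
  also have "top_block t r V (W * proj L) * proj M = top_block t r V (W * proj L)"
  proof -
    define G12 where "G12 = W * mat_adjoint (mp_inverse L)"
    define G11 where "G11 = (V - G12 * mat_adjoint R) * mat_adjoint T'"
    have G12: "G12 \<in> carrier_mat t r" unfolding G12_def using W Lp by simp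
    have G11: "G11 \<in> carrier_mat t t" unfolding G11_def
      using mult_carrier_mat[OF minus_carrier_mat[OF mult_carrier_mat[OF G12 mat_adjoint_carrier[OF R]]]
          mat_adjoint_carrier[OF T']] .
    have VG: "V - G12 * mat_adjoint R \<in> carrier_mat t t"
      using minus_carrier_mat[OF mult_carrier_mat[OF G12 mat_adjoint_carrier[OF R]]] .
    have "G11 * mat_adjoint T = (V - G12 * mat_adjoint R) * (mat_adjoint T' * mat_adjoint T)"
      unfolding G11_def by (rule assoc_mult_mat[OF VG mat_adjoint_carrier[OF T'] mat_adjoint_carrier[OF T]])
    also have "mat_adjoint T' * mat_adjoint T = 1\<^sub>m t"
      using arg_cong[OF TT', of mat_adjoint] mat_adjoint_mult[OF T T'] by simp
    finally have "G11 * mat_adjoint T = V - G12 * mat_adjoint R" using right_mult_one_mat[OF VG] by simp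
    then have "G11 * mat_adjoint T + G12 * mat_adjoint R = V"
      using V G12 R by (intro eq_matI) auto
    moreover have "G12 * mat_adjoint L = W * proj L"
      using mat_adjoint_mult[OF L Lp] mat_adjoint_proj[OF L] W Lp L
      by (simp add: G12_def proj_def assoc_mult_mat[of _ t r _ r _ r])
    ultimately have "top_block t r G11 G12 * mat_adjoint M = top_block t r V (W * proj L)"
      unfolding M_def mat_adjoint_four_block_mat[OF T R zero_carrier_mat L] mat_adjoint_zero
      by (subst mult_four_block_mat[OF G11 G12 zero_carrier_mat zero_carrier_mat
          mat_adjoint_carrier[OF T] zero_carrier_mat mat_adjoint_carrier[OF R] mat_adjoint_carrier[OF L]])
        (use G11 G12 T R L WQ in simp)
    moreover have "top_block t r G11 G12 \<in> carrier_mat (t + r) (t + r)" using G11 by simp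
    ultimately show ?thesis using mult_proj_eq_self_if_factor[OF M] by metis
  qed
  finally show ?thesis unfolding M_def .
qed

lemma mp_inverse_top_block:
  assumes T: "T \<in> carrier_mat t t" and T': "T' \<in> carrier_mat t t"
    and TT': "T * T' = 1\<^sub>m t" and T'T: "T' * T = 1\<^sub>m t"
  shows "mp_inverse (top_block t r T (0\<^sub>m t r)) = top_block t r T' (0\<^sub>m t r)"
proof (rule mp_inverse_eqI)
  have Z: "0\<^sub>m t r \<in> carrier_mat t r" by simp
  have E: "top_block t r (1\<^sub>m t) (0\<^sub>m t r) = mat_adjoint (top_block t r (1\<^sub>m t) (0\<^sub>m t r))"
    using mat_adjoint_top_block[OF one_carrier_mat Z] by simp
  show "is_mp_inverse (top_block t r T (0\<^sub>m t r)) (top_block t r T' (0\<^sub>m t r))"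
    unfolding is_mp_inverse_def top_block_mult[OF T T' Z Z] top_block_mult[OF T' T Z Z] TT' T'T
    using T T' E by (simp add: top_block_mult[OF _ _ Z Z])
qed (use T T' in auto)

lemma is_mp_inverse_upper_triangular_top_block:
  assumes T: "T \<in> carrier_mat t t" and T': "T' \<in> carrier_mat t t"
    and TT': "T * T' = 1\<^sub>m t" and T'T: "T' * T = 1\<^sub>m t"
    and S: "S \<in> carrier_mat t r" and N: "N \<in> carrier_mat r r" and W: "W \<in> carrier_mat t r"
    and mp: "is_mp_inverse (four_block_mat T S (0\<^sub>m r t) N) (top_block t r T' W)"
  shows "S = 0\<^sub>m t r \<and> N = 0\<^sub>m r r"
proof -
  define B where "B = four_block_mat T S (0\<^sub>m r t) N"
  define H where "H = top_block t r T' W"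
  have BHB: "B * H * B = B" and HB_adj: "mat_adjoint (H * B) = H * B"
    using mp unfolding is_mp_inverse_def B_def[symmetric] H_def[symmetric] by blast+
  have TW: "T * W \<in> carrier_mat t r" using T W by simp
  have SWN: "S + T * W * N \<in> carrier_mat t r" using S TW N by simp
  have "B * H = top_block t r (1\<^sub>m t) (T * W)"
    unfolding B_def H_def four_block_mat_mult_top_block[OF T' T W S N] TT' ..
  then have "B = top_block t r (1\<^sub>m t) (T * W) * B" using BHB by simp
  also have "\<dots> = top_block t r T (S + T * W * N)"
    unfolding B_def top_block_mult_four_block_mat[OF one_carrier_mat T TW S N] using T S by simp
  finally have N0: "N = 0\<^sub>m r r"
    unfolding B_def four_block_mat_inject[OF T T S SWN zero_carrier_mat zero_carrier_mat N zero_carrier_mat]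
    by simp
  have T'S: "T' * S \<in> carrier_mat t r" using T' S by simp
  have "H * B = top_block t r (1\<^sub>m t) (T' * S)"
    unfolding B_def H_def top_block_mult_four_block_mat[OF T' T W S N] T'T
    using W T'S N0 by simp
  then have "four_block_mat (1\<^sub>m t) (0\<^sub>m t r) (mat_adjoint (T' * S)) (0\<^sub>m r r) =
      top_block t r (1\<^sub>m t) (T' * S)"
    using HB_adj mat_adjoint_top_block[OF one_carrier_mat T'S] by simp
  then have T'S0: "T' * S = 0\<^sub>m t r"
    unfolding four_block_mat_inject[OF one_carrier_mat one_carrier_mat zero_carrier_mat T'S
        mat_adjoint_carrier[OF T'S] zero_carrier_mat zero_carrier_mat zero_carrier_mat]
    by simp
  have "S = T * (T' * S)"
    using assoc_mult_mat[OF T T' S] TT' S by simp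
  also have "\<dots> = 0\<^sub>m t r" unfolding T'S0 using T by simp
  finally show ?thesis using N0 by simp
qed

lemma msum_carrier: "(\<And>i. i < l \<Longrightarrow> f i \<in> carrier_mat r c) \<Longrightarrow> msum r c f l \<in> carrier_mat r c"
  by (induction l) auto

lemma msum_cong: "(\<And>i. i < l \<Longrightarrow> f i = g i) \<Longrightarrow> msum r c f l = msum r c g l"
  by (induction l) auto

lemma msum_mult_right:
  assumes "\<And>i. i < l \<Longrightarrow> f i \<in> carrier_mat r c" and "N \<in> carrier_mat c c'"
  shows "msum r c f l * N = msum r c' (\<lambda>i. f i * N) l"
  using assms by (induction l) (auto simp: add_mult_distrib_mat[OF msum_carrier])

context
  fixes T S N :: "complex mat" and t r :: nat
  assumes T: "T \<in> carrier_mat t t" and S: "S \<in> carrier_mat t r" and N: "N \<in> carrier_mat r r"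
begin

lemma ttilde_carrier: "ttilde T S N l \<in> carrier_mat t r"
  unfolding ttilde_def carrier_matD[OF S] by (rule msum_carrier) (use T S N in auto)

lemma ttilde_0: "ttilde T S N 0 = 0\<^sub>m t r"
  unfolding ttilde_def using S by simp

lemma ttilde_Suc: "ttilde T S N (Suc l) = T ^\<^sub>m l * S + ttilde T S N l * N"
proof -
  have TS: "T ^\<^sub>m i * S \<in> carrier_mat t r" for i using mult_carrier_mat[OF pow_carrier_mat[OF T] S] .
  have "ttilde T S N (Suc l) = msum t r (\<lambda>i. T ^\<^sub>m i * S * N ^\<^sub>m (l - i)) l + T ^\<^sub>m l * S"
    unfolding ttilde_def carrier_matD[OF S] using N by (simp add: right_mult_one_mat[OF TS])
  also have "msum t r (\<lambda>i. T ^\<^sub>m i * S * N ^\<^sub>m (l - i)) l =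
      msum t r (\<lambda>i. T ^\<^sub>m i * S * N ^\<^sub>m (l - 1 - i) * N) l"
  proof (rule msum_cong)
    fix i assume "i < l"
    then have "l - i = Suc (l - 1 - i)" by simp
    then show "T ^\<^sub>m i * S * N ^\<^sub>m (l - i) = T ^\<^sub>m i * S * N ^\<^sub>m (l - 1 - i) * N"
      using TS N by (simp add: assoc_mult_mat[of _ t r _ r _ r])
  qed
  also have "\<dots> = ttilde T S N l * N"
    unfolding ttilde_def carrier_matD[OF S]
    by (subst msum_mult_right) (use N mult_carrier_mat[OF TS pow_carrier_mat[OF N]] in auto)
  finally show ?thesis using comm_add_mat[OF mult_carrier_mat[OF ttilde_carrier N] TS] by simp
qed

lemma ttilde_Suc': "ttilde T S N (Suc l) = T * ttilde T S N l + S * N ^\<^sub>m l"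
proof (induction l)
  case 0
  show ?case using ttilde_Suc[of 0] ttilde_0 T S N by simp
next
  case (Suc l)
  have X: "T ^\<^sub>m l * S \<in> carrier_mat t r" and Y: "ttilde T S N l * N \<in> carrier_mat t r"
    using mult_carrier_mat[OF pow_carrier_mat[OF T] S] mult_carrier_mat[OF ttilde_carrier N] .
  have TTt: "T * ttilde T S N l \<in> carrier_mat t r" and SN: "S * N ^\<^sub>m l \<in> carrier_mat t r"
    using mult_carrier_mat[OF T ttilde_carrier] mult_carrier_mat[OF S pow_carrier_mat[OF N]] .
  have "T * ttilde T S N (Suc l) = T * (T ^\<^sub>m l * S) + T * (ttilde T S N l * N)"
    unfolding ttilde_Suc by (rule mult_add_distrib_mat[OF T X Y])
  also have "T * (T ^\<^sub>m l * S) = T ^\<^sub>m Suc l * S"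
    unfolding pow_mat_Suc_left[OF T] using T S by (simp add: assoc_mult_mat[of _ t t _ t _ r])
  also have "T * (ttilde T S N l * N) = T * ttilde T S N l * N"
    using T N ttilde_carrier by (simp add: assoc_mult_mat[of _ t t _ r _ r])
  finally have 1: "T * ttilde T S N (Suc l) = T ^\<^sub>m Suc l * S + T * ttilde T S N l * N" .
  have "ttilde T S N (Suc (Suc l)) = T ^\<^sub>m Suc l * S + (T * ttilde T S N l + S * N ^\<^sub>m l) * N"
    unfolding ttilde_Suc[of "Suc l"] Suc ..
  also have "(T * ttilde T S N l + S * N ^\<^sub>m l) * N = T * ttilde T S N l * N + S * N ^\<^sub>m Suc l"
    using add_mult_distrib_mat[OF TTt SN N] S N by (simp add: assoc_mult_mat[of _ t r _ r _ r])
  finally have 2: "ttilde T S N (Suc (Suc l)) =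
      T ^\<^sub>m Suc l * S + (T * ttilde T S N l * N + S * N ^\<^sub>m Suc l)" .
  show ?case unfolding 1 2
    by (rule assoc_add_mat[symmetric, OF mult_carrier_mat[OF pow_carrier_mat[OF T] S]
          mult_carrier_mat[OF TTt N] mult_carrier_mat[OF S pow_carrier_mat[OF N]]])
qed

lemma pow_four_block_mat_upper:
  "four_block_mat T S (0\<^sub>m r t) N ^\<^sub>m j = four_block_mat (T ^\<^sub>m j) (ttilde T S N j) (0\<^sub>m r t) (N ^\<^sub>m j)"
proof (induction j)
  case 0
  have "four_block_mat T S (0\<^sub>m r t) N ^\<^sub>m 0 = 1\<^sub>m (t + r)"
    using carrier_matD[OF T] carrier_matD[OF N] by simp
  then show ?case using carrier_matD[OF T] carrier_matD[OF N] by (simp add: ttilde_0)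
next
  case (Suc j)
  then show ?case
    using mult_four_block_mat_upper[OF pow_carrier_mat[OF T] T ttilde_carrier S pow_carrier_mat[OF N] N]
    by (simp add: ttilde_Suc)
qed

end

section \<open>The core-EP decomposition\<close>

locale core_ep_decomposition = unitary_similarity U n
  for U :: "complex mat" and n :: nat +
  fixes A T S N :: "complex mat" and t r k :: nat
  assumes n_split: "n = t + r"
    and T: "T \<in> carrier_mat t t" and T_invertible: "invertible_mat T"
    and S: "S \<in> carrier_mat t r"
    and N: "N \<in> carrier_mat r r" and N_nilpotent: "N ^\<^sub>m k = 0\<^sub>m r r"
    and k: "k = mat_index A"
    and decomposition: "A = U * four_block_mat T S (0\<^sub>m r t) N * mat_adjoint U"
begin

abbreviation "B \<equiv> four_block_mat T S (0\<^sub>m r t) N"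
abbreviation "T' \<equiv> mat_inv T"
abbreviation "Tt \<equiv> ttilde T S N"

abbreviation inv_block :: "complex mat \<Rightarrow> complex mat" where
  "inv_block X \<equiv> uconj (top_block t r T' X)"

lemma T': "T' \<in> carrier_mat t t" and TT': "T * T' = 1\<^sub>m t" and T'T: "T' * T = 1\<^sub>m t"
  using mat_inv[OF T T_invertible] by auto

lemma Tt: "Tt l \<in> carrier_mat t r"
  using ttilde_carrier[OF T S N] .

lemma B: "B \<in> carrier_mat n n"
  unfolding n_split using T N by simp

lemma top_block_carrier: "V \<in> carrier_mat t t \<Longrightarrow> top_block t r V W \<in> carrier_mat n n"
  unfolding n_split by simp

lemma A: "A = uconj B"
  unfolding decomposition uconj_def ..

lemma A_carrier: "A \<in> carrier_mat n n"
  unfolding A using B by simp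

lemma T_T'_pow_cancel:
  "T ^\<^sub>m a * T' ^\<^sub>m b = (if b \<le> a then T ^\<^sub>m (a - b) else T' ^\<^sub>m (b - a))"
  "T' ^\<^sub>m a * T ^\<^sub>m b = (if b \<le> a then T' ^\<^sub>m (a - b) else T ^\<^sub>m (b - a))"
  using pow_mat_mult_pow_mat_right_inverse[OF T T' TT'] pow_mat_mult_pow_mat_right_inverse[OF T' T T'T]
  by auto

lemma A_pow: "A ^\<^sub>m j = uconj (four_block_mat (T ^\<^sub>m j) (Tt j) (0\<^sub>m r t) (N ^\<^sub>m j))"
  unfolding A uconj_pow[OF B] pow_four_block_mat_upper[OF T S N] ..

lemma A_pow_index: "A ^\<^sub>m k = uconj (top_block t r (T ^\<^sub>m k) (Tt k))"
  unfolding A_pow N_nilpotent ..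

lemma mat_range_inv_block_subset:
  assumes V: "V \<in> carrier_mat t t" and W: "W \<in> carrier_mat t r"
    and V': "V' \<in> carrier_mat t t" and W': "W' \<in> carrier_mat t r"
    and V'': "V'' \<in> carrier_mat t t" and V'V'': "V' * V'' = 1\<^sub>m t"
  shows "mat_range (uconj (top_block t r V W)) \<subseteq> mat_range (uconj (top_block t r V' W'))"
proof -
  have V''V: "V'' * V \<in> carrier_mat t t" using V'' V by simp
  have "V' * (V'' * V) = V" "V' * (V'' * W) = W"
    using assoc_mult_mat[OF V' V'' V] assoc_mult_mat[OF V' V'' W] V'V'' V W by simp_all
  then have "top_block t r V W = top_block t r V' W' * top_block t r (V'' * V) (V'' * W)"
    unfolding top_block_mult[OF V' V''V W' mult_carrier_mat[OF V'' W]] by simp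
  then have "uconj (top_block t r V W) =
      uconj (top_block t r V' W') * uconj (top_block t r (V'' * V) (V'' * W))"
    using uconj_mult[OF top_block_carrier[OF V'] top_block_carrier[OF V''V]] by simp
  then show ?thesis
    using mat_range_mult_subset[OF uconj_carrier[OF top_block_carrier[OF V']]
        uconj_carrier[OF top_block_carrier[OF V''V]]] by simp
qed

lemmas [simp] = T T' S N Tt B A_carrier
  carrier_matD[OF T] carrier_matD[OF T'] carrier_matD[OF S] carrier_matD[OF N]

lemma block_mult_carrier [simp]:
  "V \<in> carrier_mat t t \<Longrightarrow> V' \<in> carrier_mat t t \<Longrightarrow> V * V' \<in> carrier_mat t t"
  "V \<in> carrier_mat t t \<Longrightarrow> X \<in> carrier_mat t r \<Longrightarrow> V * X \<in> carrier_mat t r"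
  "X \<in> carrier_mat t r \<Longrightarrow> L \<in> carrier_mat r r \<Longrightarrow> X * L \<in> carrier_mat t r"
  "L \<in> carrier_mat r r \<Longrightarrow> L' \<in> carrier_mat r r \<Longrightarrow> L * L' \<in> carrier_mat r r"
  by (rule mult_carrier_mat; assumption)+

lemma inv_block_carrier [simp]: "inv_block X \<in> carrier_mat n n"
  using top_block_carrier[OF T'] by simp

lemma T'_pow_Suc_mult_T_pow: "T' ^\<^sub>m Suc j * T ^\<^sub>m j = T'"
  using T_T'_pow_cancel(2)[of "Suc j" j] by simp

lemma T_pow_mult_T'_pow: "T ^\<^sub>m j * T' ^\<^sub>m j = 1\<^sub>m t"
  using T_T'_pow_cancel(1)[of j j] by simp

lemma T_mult_T'_pow_Suc: "T * T' ^\<^sub>m Suc j = T' ^\<^sub>m j"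
  unfolding pow_mat_Suc_left[OF T'] assoc_mult_mat[OF T T' pow_carrier_mat[OF T'], symmetric] TT'
  by (rule left_mult_one_mat[OF pow_carrier_mat[OF T']])

lemma T'_pow_Suc_mult_T: "T' ^\<^sub>m Suc j * T = T' ^\<^sub>m j"
  unfolding pow_mat.simps(2) assoc_mult_mat[OF pow_carrier_mat[OF T'] T' T] T'T
  by (rule right_mult_one_mat[OF pow_carrier_mat[OF T']])

lemma T'_mult_T_pow_Suc: "T' * T ^\<^sub>m Suc j = T ^\<^sub>m j"
  unfolding pow_mat_Suc_left[OF T] assoc_mult_mat[OF T' T pow_carrier_mat[OF T], symmetric] T'T
  by (rule left_mult_one_mat[OF pow_carrier_mat[OF T]])

lemma inv_block_mult_A:
  "inv_block X * A = uconj (top_block t r (1\<^sub>m t) (T' * S + X * N))"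
  if "X \<in> carrier_mat t r"
  unfolding A uconj_mult[OF top_block_carrier[OF T'] B]
    top_block_mult_four_block_mat[OF T' T that S N] T'T ..

lemma A_mult_inv_block:
  "A * inv_block X = uconj (top_block t r (1\<^sub>m t) (T * X))"
  if "X \<in> carrier_mat t r"
  unfolding A uconj_mult[OF B top_block_carrier[OF T']]
    four_block_mat_mult_top_block[OF T' T that S N] TT' ..

lemma inv_block_eq_iff:
  assumes "X \<in> carrier_mat t r" "Y \<in> carrier_mat t r"
  shows "inv_block X = inv_block Y \<longleftrightarrow> X = Y"
  using uconj_inj_iff top_block_eq_iff[OF T' T' assms] top_block_carrier[OF T'] by simp

lemma core_ep_A: "core_ep A = inv_block (0\<^sub>m t r)"
proof (rule core_ep_eqI[OF A_carrier inv_block_carrier])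
  have Z: "0\<^sub>m t r \<in> carrier_mat t r" by simp
  have "inv_block (0\<^sub>m t r) * A * inv_block (0\<^sub>m t r) =
      uconj (top_block t r (1\<^sub>m t) (T' * S) * top_block t r T' (0\<^sub>m t r))"
    unfolding inv_block_mult_A[OF Z] using Z T' S
    by (simp add: uconj_mult top_block_carrier)
  then show "inv_block (0\<^sub>m t r) * A * inv_block (0\<^sub>m t r) = inv_block (0\<^sub>m t r)"
    unfolding top_block_mult[OF one_carrier_mat T' mult_carrier_mat[OF T' S] Z] using T' by simp
  have adj: "mat_adjoint (inv_block (0\<^sub>m t r)) = uconj (top_block t r (mat_adjoint T') (0\<^sub>m t r))"
    unfolding uconj_adjoint[OF top_block_carrier[OF T']] mat_adjoint_top_block[OF T' Z] by simp
  have T'_adj: "mat_adjoint T' * mat_adjoint T = 1\<^sub>m t"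
    using mat_adjoint_mult[OF T T'] TT' by simp
  note sub = mat_range_inv_block_subset
  show "mat_range (inv_block (0\<^sub>m t r)) = mat_range (A ^\<^sub>m mat_index A)"
    unfolding k[symmetric] A_pow_index
    by (intro equalityI sub[OF _ _ _ _ _ T_pow_mult_T'_pow] sub[OF _ _ _ _ T T'T]) simp_all
  show "mat_range (mat_adjoint (inv_block (0\<^sub>m t r))) = mat_range (A ^\<^sub>m mat_index A)"
    unfolding k[symmetric] A_pow_index adj
    by (intro equalityI sub[OF _ _ _ _ _ T_pow_mult_T'_pow] sub[OF _ _ _ _ _ T'_adj]) simp_all
qed

lemma core_ep_pow: "core_ep A ^\<^sub>m Suc j = uconj (top_block t r (T' ^\<^sub>m Suc j) (0\<^sub>m t r))"
proof (induction j)
  case 0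
  show ?case unfolding core_ep_A using T' by simp
next
  case (Suc j)
  have "core_ep A ^\<^sub>m Suc (Suc j) = uconj (top_block t r (T' ^\<^sub>m Suc j) (0\<^sub>m t r) * top_block t r T' (0\<^sub>m t r))"
    unfolding pow_mat.simps(2)[of _ "Suc j"] Suc unfolding core_ep_A
    by (rule uconj_mult) (simp_all add: top_block_carrier)
  then show ?case
    unfolding top_block_mult[OF pow_carrier_mat[OF T'] T' zero_carrier_mat zero_carrier_mat] by simp
qed

lemma mwg_inverse_A: "mwg_inverse m A = inv_block (T' ^\<^sub>m Suc m * Tt m)"
proof -
  have "mwg_inverse m A = uconj (top_block t r (T' ^\<^sub>m Suc m) (0\<^sub>m t r) *
      four_block_mat (T ^\<^sub>m m) (Tt m) (0\<^sub>m r t) (N ^\<^sub>m m))"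
    unfolding mwg_inverse_def core_ep_pow A_pow
    by (rule uconj_mult) (simp_all add: top_block_carrier n_split)
  also have "\<dots> = inv_block (T' ^\<^sub>m Suc m * Tt m)"
    by (subst top_block_mult_four_block_mat) (simp_all add: T'_pow_Suc_mult_T_pow del: pow_mat.simps(2))
  finally show ?thesis .
qed

lemma mwc_inverse_A: "mwc_inverse m A = inv_block (T' ^\<^sub>m Suc m * Tt m * proj (N ^\<^sub>m m))"
proof -
  have Am: "four_block_mat (T ^\<^sub>m m) (Tt m) (0\<^sub>m r t) (N ^\<^sub>m m) \<in> carrier_mat n n"
    using n_split by simp
  have "mwc_inverse m A = inv_block (T' ^\<^sub>m Suc m * Tt m) *
      uconj (proj (four_block_mat (T ^\<^sub>m m) (Tt m) (0\<^sub>m r t) (N ^\<^sub>m m)))"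
    unfolding mwc_inverse_def mwg_inverse_A A_pow uconj_proj[OF Am] ..
  also have "\<dots> = uconj (top_block t r T' (T' ^\<^sub>m Suc m * Tt m) *
      proj (four_block_mat (T ^\<^sub>m m) (Tt m) (0\<^sub>m r t) (N ^\<^sub>m m)))"
    by (rule uconj_mult[OF top_block_carrier[OF T'] proj_carrier[OF Am]])
  also have "\<dots> = inv_block (T' ^\<^sub>m Suc m * Tt m * proj (N ^\<^sub>m m))"
    by (subst top_block_mult_proj[OF T' _ pow_carrier_mat[OF T] pow_carrier_mat[OF T']
          T_pow_mult_T'_pow Tt pow_carrier_mat[OF N]]) simp_all
  finally show ?thesis .
qed

lemma T'_pow_mult_eq_iff:
  assumes X: "X \<in> carrier_mat t r" and Y: "Y \<in> carrier_mat t r"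
  shows "T' ^\<^sub>m j * X = Y \<longleftrightarrow> X = T ^\<^sub>m j * Y"
proof
  assume "T' ^\<^sub>m j * X = Y"
  then have "T ^\<^sub>m j * Y = (T ^\<^sub>m j * T' ^\<^sub>m j) * X"
    using assoc_mult_mat[OF pow_carrier_mat[OF T] pow_carrier_mat[OF T'] X] by simp
  then show "X = T ^\<^sub>m j * Y" unfolding T_pow_mult_T'_pow using X by simp
next
  assume "X = T ^\<^sub>m j * Y"
  then have "T' ^\<^sub>m j * X = (T' ^\<^sub>m j * T ^\<^sub>m j) * Y"
    using assoc_mult_mat[OF pow_carrier_mat[OF T'] pow_carrier_mat[OF T] Y] by simp
  then show "T' ^\<^sub>m j * X = Y" using T_T'_pow_cancel(2)[of j j] Y by simp
qed

lemma mwc_inverse_eq_inv_block_iff: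
  assumes Y: "Y \<in> carrier_mat t r"
  shows "mwc_inverse m A = inv_block Y \<longleftrightarrow> Tt m * proj (N ^\<^sub>m m) = T ^\<^sub>m Suc m * Y"
proof -
  define Q where "Q = proj (N ^\<^sub>m m)"
  have Q: "Q \<in> carrier_mat r r" unfolding Q_def by (rule proj_carrier[OF pow_carrier_mat[OF N]])
  have "mwc_inverse m A = inv_block Y \<longleftrightarrow> T' ^\<^sub>m Suc m * Tt m * Q = Y"
    unfolding mwc_inverse_A Q_def[symmetric] by (rule inv_block_eq_iff) (use Q Y in simp_all)
  also have "\<dots> \<longleftrightarrow> T' ^\<^sub>m Suc m * (Tt m * Q) = Y"
    by (simp only: assoc_mult_mat[OF pow_carrier_mat[OF T'] Tt Q])
  also have "\<dots> \<longleftrightarrow> Tt m * Q = T ^\<^sub>m Suc m * Y"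
    by (rule T'_pow_mult_eq_iff) (use Q Y in simp_all)
  finally show ?thesis unfolding Q_def .
qed

lemma ttilde_index_Suc: "Tt (Suc k) = T * Tt k"
  using ttilde_Suc'[OF T S N, of k] N_nilpotent by simp

lemma drazin_block_identity:
  "T' * S + (T' ^\<^sub>m Suc k * Tt k) * N = T * (T' ^\<^sub>m Suc k * Tt k)"
proof -
  have "T' ^\<^sub>m k * Tt k = T' ^\<^sub>m Suc k * (T * Tt k)"
    unfolding assoc_mult_mat[OF pow_carrier_mat[OF T'] T Tt, symmetric] T'_pow_Suc_mult_T ..
  also have "\<dots> = T' ^\<^sub>m Suc k * (T ^\<^sub>m k * S) + T' ^\<^sub>m Suc k * (Tt k * N)"
    unfolding ttilde_index_Suc[symmetric] ttilde_Suc[OF T S N]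
    by (rule mult_add_distrib_mat[OF pow_carrier_mat[OF T'] mult_carrier_mat[OF pow_carrier_mat[OF T] S]
          mult_carrier_mat[OF Tt N]])
  also have "T' ^\<^sub>m Suc k * (T ^\<^sub>m k * S) = T' * S"
    unfolding assoc_mult_mat[OF pow_carrier_mat[OF T'] pow_carrier_mat[OF T] S, symmetric]
      T'_pow_Suc_mult_T_pow ..
  also have "T' ^\<^sub>m Suc k * (Tt k * N) = (T' ^\<^sub>m Suc k * Tt k) * N"
    by (rule assoc_mult_mat[OF pow_carrier_mat[OF T'] Tt N, symmetric])
  finally show ?thesis
    unfolding assoc_mult_mat[OF T pow_carrier_mat[OF T'] Tt, symmetric] T_mult_T'_pow_Suc by simp
qed

lemma drazin_A: "drazin A = inv_block (T' ^\<^sub>m Suc k * Tt k)"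
proof -
  define Z where "Z = T' ^\<^sub>m Suc k * Tt k"
  have Z: "Z \<in> carrier_mat t r" unfolding Z_def by simp
  have AD: "A * inv_block Z = inv_block Z * A"
    unfolding inv_block_mult_A[OF Z] A_mult_inv_block[OF Z] unfolding Z_def drazin_block_identity ..
  have "inv_block Z * A * inv_block Z = uconj (top_block t r (1\<^sub>m t) (T * Z)) * inv_block Z"
    unfolding AD[symmetric] A_mult_inv_block[OF Z] ..
  also have "\<dots> = uconj (top_block t r (1\<^sub>m t) (T * Z) * top_block t r T' Z)"
    by (rule uconj_mult[OF top_block_carrier[OF one_carrier_mat] top_block_carrier[OF T']])
  also have "\<dots> = inv_block Z"
    unfolding top_block_mult[OF one_carrier_mat T' mult_carrier_mat[OF T Z] Z] using Z by simp
  finally have DAD: "inv_block Z * A * inv_block Z = inv_block Z" .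
  have T'Tt: "T' * Tt (Suc k) = Tt k"
    unfolding ttilde_index_Suc assoc_mult_mat[OF T' T Tt, symmetric] T'T
    by (rule left_mult_one_mat[OF Tt])
  have blocks: "top_block t r T' Z * four_block_mat (T ^\<^sub>m Suc k) (Tt (Suc k)) (0\<^sub>m r t) (N ^\<^sub>m Suc k)
      = top_block t r (T ^\<^sub>m k) (Tt k)"
    unfolding top_block_mult_four_block_mat[OF T' pow_carrier_mat[OF T] Z Tt pow_carrier_mat[OF N]]
      T'_mult_T_pow_Suc T'Tt
    using Z N_nilpotent by simp
  have "inv_block Z * A ^\<^sub>m Suc k =
      uconj (top_block t r T' Z * four_block_mat (T ^\<^sub>m Suc k) (Tt (Suc k)) (0\<^sub>m r t) (N ^\<^sub>m Suc k))"
    unfolding A_pow by (rule uconj_mult[OF top_block_carrier[OF T']]) (simp add: n_split)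
  then have "inv_block Z * A ^\<^sub>m Suc k = A ^\<^sub>m k" unfolding blocks A_pow_index .
  then show ?thesis unfolding Z_def[symmetric]
    by (intro drazin_eqI[OF A_carrier inv_block_carrier DAD AD]) (simp add: k)
qed

lemma dmp_inverse_A: "dmp_inverse A = inv_block (T' ^\<^sub>m Suc k * Tt k * proj N)"
proof -
  have "dmp_inverse A = drazin A * proj A"
    unfolding dmp_inverse_def proj_def drazin_A using mp_inverse_carrier[OF A_carrier]
    by (simp add: assoc_mult_mat[of _ n n _ n _ n])
  also have "\<dots> = uconj (top_block t r T' (T' ^\<^sub>m Suc k * Tt k) * proj B)"
    unfolding drazin_A unfolding A uconj_proj[OF B]
    by (rule uconj_mult[OF top_block_carrier[OF T'] proj_carrier[OF B]])
  also have "\<dots> = inv_block (T' ^\<^sub>m Suc k * Tt k * proj N)"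
    by (subst top_block_mult_proj[OF T' _ T T' TT' S N]) simp_all
  finally show ?thesis .
qed

lemma wg_inverse_A: "wg_inverse A = inv_block (T' ^\<^sub>m 2 * S)"
proof -
  have "wg_inverse A = uconj (top_block t r (T' ^\<^sub>m 2) (0\<^sub>m t r) * B)"
    unfolding wg_inverse_def numeral_2_eq_2 core_ep_pow unfolding A
    by (rule uconj_mult) (simp_all add: top_block_carrier)
  also have "\<dots> = inv_block (T' ^\<^sub>m 2 * S)"
    using T_T'_pow_cancel(2)[of 2 1] by (subst top_block_mult_four_block_mat) simp_all
  finally show ?thesis .
qed

lemma wc_inverse_A: "wc_inverse A = inv_block (T' ^\<^sub>m 2 * S * proj N)"
proof -
  have "wc_inverse A = uconj (top_block t r T' (T' ^\<^sub>m 2 * S) * proj B)"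
    unfolding wc_inverse_def wg_inverse_A unfolding A uconj_proj[OF B]
    by (rule uconj_mult[OF top_block_carrier[OF T'] proj_carrier[OF B]])
  also have "\<dots> = inv_block (T' ^\<^sub>m 2 * S * proj N)"
    by (subst top_block_mult_proj[OF T' _ T T' TT' S N]) simp_all
  finally show ?thesis .
qed

lemma mwc_eq_mp_inverse_iff:
  assumes m: "1 \<le> m"
  shows "mwc_inverse m A = mp_inverse A \<longleftrightarrow> S = 0\<^sub>m t r \<and> N = 0\<^sub>m r r"
proof
  define W where "W = T' ^\<^sub>m Suc m * Tt m * proj (N ^\<^sub>m m)"
  have W: "W \<in> carrier_mat t r" unfolding W_def using proj_carrier[OF pow_carrier_mat[OF N]] by simp
  have mp_A: "mp_inverse A = uconj (mp_inverse B)" unfolding A by (rule uconj_mp_inverse[OF B])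
  assume "mwc_inverse m A = mp_inverse A"
  then have "uconj (mp_inverse B) = uconj (top_block t r T' W)"
    unfolding mp_A mwc_inverse_A W_def[symmetric] by simp
  then have "mp_inverse B = top_block t r T' W"
    unfolding uconj_inj_iff[OF mp_inverse_carrier[OF B] top_block_carrier[OF T']] .
  then have "is_mp_inverse B (top_block t r T' W)" using is_mp_inverse_mp_inverse[OF B] by simp
  then show "S = 0\<^sub>m t r \<and> N = 0\<^sub>m r r"
    by (rule is_mp_inverse_upper_triangular_top_block[OF T T' TT' T'T S N W])
next
  assume "S = 0\<^sub>m t r \<and> N = 0\<^sub>m r r"
  then have S0: "S = 0\<^sub>m t r" and N0: "N = 0\<^sub>m r r" by auto
  obtain m' where m': "m = Suc m'" using m by (cases m) auto
  have "proj (N ^\<^sub>m m) = 0\<^sub>m r r"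
    unfolding proj_def m' N0 using mp_inverse_carrier[of "0\<^sub>m r r" r r] by simp
  then have "T' ^\<^sub>m Suc m * Tt m * proj (N ^\<^sub>m m) = 0\<^sub>m t r"
    using right_mult_zero_mat[OF mult_carrier_mat[OF pow_carrier_mat[OF T'] Tt]] by metis
  then have "mwc_inverse m A = inv_block (0\<^sub>m t r)" unfolding mwc_inverse_A by (rule arg_cong)
  also have "\<dots> = mp_inverse A"
    unfolding A S0 N0 uconj_mp_inverse[OF B[unfolded S0 N0]] mp_inverse_top_block[OF T T' TT' T'T] ..
  finally show "mwc_inverse m A = mp_inverse A" .
qed

lemma mwc_eq_drazin_iff:
  "mwc_inverse m A = drazin A \<longleftrightarrow> Tt m * proj (N ^\<^sub>m m) = mat_ipow T (int m - int k) * Tt k"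
proof -
  have "T ^\<^sub>m Suc m * (T' ^\<^sub>m Suc k * Tt k) = mat_ipow T (int m - int k) * Tt k"
    using mat_ipow_diff[OF T T_invertible, of "Suc m" "Suc k"]
    by (simp flip: assoc_mult_mat[of _ t t _ t _ r])
  then show ?thesis unfolding drazin_A by (subst mwc_inverse_eq_inv_block_iff) simp_all
qed

lemma mwc_eq_core_ep_iff: "mwc_inverse m A = core_ep A \<longleftrightarrow> Tt m * N ^\<^sub>m m = 0\<^sub>m t r"
  unfolding core_ep_A mwc_inverse_eq_inv_block_iff[OF zero_carrier_mat]
  using mult_proj_eq_0_iff[OF pow_carrier_mat[OF N] Tt] by simp

lemma mwc_eq_dmp_inverse_iff:
  "mwc_inverse m A = dmp_inverse A \<longleftrightarrow>
    Tt m * proj (N ^\<^sub>m m) = mat_ipow T (int m - int k) * Tt k * proj N"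
proof -
  have "T ^\<^sub>m Suc m * (T' ^\<^sub>m Suc k * Tt k * proj N) = mat_ipow T (int m - int k) * Tt k * proj N"
    using mat_ipow_diff[OF T T_invertible, of "Suc m" "Suc k"] proj_carrier[OF N]
    by (simp flip: assoc_mult_mat[of _ t t _ t _ r] assoc_mult_mat[of _ t t _ r _ r]
        assoc_mult_mat[of _ t r _ r _ r])
  then show ?thesis unfolding dmp_inverse_A
    by (subst mwc_inverse_eq_inv_block_iff) (simp_all add: proj_carrier[OF N])
qed

lemma mwc_eq_wc_inverse_iff:
  assumes "1 \<le> m"
  shows "mwc_inverse m A = wc_inverse A \<longleftrightarrow> Tt m * proj (N ^\<^sub>m m) = T ^\<^sub>m (m - 1) * S * proj N"
proof -
  have "T ^\<^sub>m Suc m * (T' ^\<^sub>m 2 * S * proj N) = T ^\<^sub>m (m - 1) * S * proj N"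
    using T_T'_pow_cancel(1)[of "Suc m" 2] assms proj_carrier[OF N]
    by (simp flip: assoc_mult_mat[of _ t t _ t _ r] assoc_mult_mat[of _ t t _ r _ r])
  then show ?thesis unfolding wc_inverse_A
    by (subst mwc_inverse_eq_inv_block_iff) (simp_all add: proj_carrier[OF N])
qed

lemma mwc_eq_mwg_inverse_iff:
  "mwc_inverse m A = mwg_inverse m A \<longleftrightarrow> mat_kernel (mat_adjoint (N ^\<^sub>m m)) \<subseteq> mat_kernel (Tt m)"
proof -
  have "T ^\<^sub>m Suc m * (T' ^\<^sub>m Suc m * Tt m) = Tt m"
    unfolding assoc_mult_mat[OF pow_carrier_mat[OF T] pow_carrier_mat[OF T'] Tt, symmetric]
      T_pow_mult_T'_pow by (rule left_mult_one_mat[OF Tt])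
  then show ?thesis unfolding mwg_inverse_A
    using mult_proj_eq_self_iff[OF pow_carrier_mat[OF N] Tt]
    by (subst mwc_inverse_eq_inv_block_iff) simp_all
qed

end

theorem theorem7p1:
  fixes A U T S N :: "complex mat" and n t k m :: nat
  assumes A: "A \<in> carrier_mat n n"
    and k: "k = mat_index A"
    and U: "U \<in> carrier_mat n n" "mat_adjoint U * U = 1\<^sub>m n"
    and T: "T \<in> carrier_mat t t" "invertible_mat T"
    and t: "t = vec_space.rank n (A ^\<^sub>m k)"
    and S: "S \<in> carrier_mat t (n - t)"
    and N: "N \<in> carrier_mat (n - t) (n - t)" "N ^\<^sub>m k = 0\<^sub>m (n - t) (n - t)"
           "\<forall>j < k. N ^\<^sub>m j \<noteq> 0\<^sub>m (n - t) (n - t)"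
    and dec: "A = U * four_block_mat T S (0\<^sub>m (n - t) t) N * mat_adjoint U"
    and m: "m \<ge> 1"
  shows "(mwc_inverse m A = mp_inverse A \<longleftrightarrow>
            S = 0\<^sub>m t (n - t) \<and> N = 0\<^sub>m (n - t) (n - t))
       \<and> (mwc_inverse m A = drazin A \<longleftrightarrow>
            ttilde T S N m * proj (N ^\<^sub>m m) = mat_ipow T (int m - int k) * ttilde T S N k)
       \<and> (mwc_inverse m A = core_ep A \<longleftrightarrow>
            ttilde T S N m * N ^\<^sub>m m = 0\<^sub>m t (n - t))
       \<and> (mwc_inverse m A = dmp_inverse A \<longleftrightarrow>
            ttilde T S N m * proj (N ^\<^sub>m m) = mat_ipow T (int m - int k) * ttilde T S N k * proj N)
       \<and> (mwc_inverse m A = wc_inverse A \<longleftrightarrow>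
            ttilde T S N m * proj (N ^\<^sub>m m) = T ^\<^sub>m (m - 1) * S * proj N)
       \<and> (mwc_inverse m A = mwg_inverse m A \<longleftrightarrow>
            mat_kernel (mat_adjoint (N ^\<^sub>m m)) \<subseteq> mat_kernel (ttilde T S N m))"
proof -
  \<comment> \<open>Of the hypothesis on \<open>t\<close> only \<open>t \<le> n\<close> is needed, and the index of \<open>N\<close> is irrelevant.\<close>
  have "t \<le> n" using vec_space.rank_le_nc[OF pow_carrier_mat[OF A, of k]] t by simp
  interpret core_ep_decomposition U n A T S N t "n - t" k
    using U T S N k dec \<open>t \<le> n\<close> by unfold_locales auto
  show ?thesis
    using mwc_eq_mp_inverse_iff[OF m] mwc_eq_drazin_iff mwc_eq_core_ep_iff mwc_eq_dmp_inverse_iff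
      mwc_eq_wc_inverse_iff[OF m] mwc_eq_mwg_inverse_iff
    by blast
qed

end
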